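(* For any positive integer $k$, in $\mathfrak{h}^1_t[[u]]$, $$\frac{1}{1-z_ku}=\exp_{\ast_t}\left(\sum_{n=1}^\infty\frac1n d_n(t)z_{nk}u^n\right).$$ In particular, if $k\ge2$, $$1+\sum_{n=1}^\infty\zeta^t(\{k\}^n)u^n=\exp\left(\sum_{n=1}^\infty\frac1nd_n(t)\zeta(nk)u^n\right).$$
   Context: $u$ is a variable commuting with everything; $d_n(t)=t^n-(t-1)^n$; $\{k\}^n$ is $n$ repetitions of $k$. $\mathfrak{h}_t=\mathbb{Q}[t]\langle x,y\rangle$, $\mathfrak{h}^1_t=\mathbb{Q}[t]+\mathfrak{h}_ty$, $z_k=x^{k-1}y$, $\frac1{1-z_ku}=\sum_{n\ge0}z_k^nu^n$ (concatenation powers). For a word $w$, $\delta(w)=1$ if $w=1$, else $0$. The $t$-harmonic product $\ast_t$ on $\mathfrak{h}^1_t$ is the commutative, associative $\mathbb{Q}[t]$-bilinear product with $1\ast_t w=w\ast_t1=w$ and $z_kw_1\ast_t z_lw_2=z_k(w_1\ast_t z_lw_2)+z_l(z_kw_1\ast_t w_2)+(1-2t)z_{k+l}(w_1\ast_t w_2)+[1-\delta(w_1)\delta(w_2)](t^2-t)x^{k+l}(w_1\ast_t w_2)$ for words $w_1,w_2\in\mathfrak{h}^1_t$; it is extended coefficientwise to power series in $u$, and $\exp_{\ast_t}(X)=\sum_{m\ge0}X^{\ast_t m}/m!$. For $k_1\ge2$, $\zeta(k_1,\ldots,k_n)=\sum_{m_1>\cdots>m_n>0}\prod m_j^{-k_j}$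 and $\zeta^t(k_1,\ldots,k_n)=\sum_{\mathbf p}t^{n-\mathrm{dep}(\mathbf p)}\zeta(\mathbf p)$, summed over sequences $\mathbf p$ obtained from $(k_1,\ldots,k_n)$ by replacing each separating comma by a comma or a plus sign ($\mathrm{dep}$ = length). *)

theory Defs
  imports "HOL-Analysis.Analysis" "HOL-Computational_Algebra.Polynomial"
          "HOL-Computational_Algebra.Formal_Power_Series"
begin

datatype letter = X | Y

type_synonym word = "letter list"

text \<open>An element of h_t: coefficient function words -> Q[t] (finitely supported
  for all elements actually used).\<close>
type_synonym hel = "word \<Rightarrow> rat poly"

text \<open>z_k = x^(k-1) y, and the word z_{k1} ... z_{kn}\<close>
definition zw :: "nat list \<Rightarrow> word" where
  "zw ks = concat (map (\<lambda>k. replicate (k - 1) X @ [Y]) ks)"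

text \<open>inverse of zw on words of h^1 (empty or ending in y)\<close>
fun dec :: "word \<Rightarrow> nat list" where
  "dec [] = []"
| "dec (Y # w) = 1 # dec w"
| "dec (X # w) = (case dec w of [] \<Rightarrow> [] | k # r \<Rightarrow> (k + 1) # r)"

definition wmon :: "word \<Rightarrow> hel" where
  "wmon w = (\<lambda>v. if v = w then 1 else 0)"

definition lcat :: "word \<Rightarrow> hel \<Rightarrow> hel" where
  "lcat p F = (\<lambda>v. if take (length p) v = p then F (drop (length p) v) else 0)"

definition supp :: "hel \<Rightarrow> word set" where
  "supp A = {v. A v \<noteq> 0}"

fun tharm :: "nat list \<Rightarrow> nat list \<Rightarrow> hel" where
  "tharm [] w = wmon (zw w)"
| "tharm (k # w) [] = wmon (zw (k # w))"
| "tharm (k # w1) (l # w2) = (\<lambda>v.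
      lcat (zw [k]) (tharm w1 (l # w2)) v
    + lcat (zw [l]) (tharm (k # w1) w2) v
    + [:1, -2:] * lcat (zw [k + l]) (tharm w1 w2) v
    + (if w1 = [] \<and> w2 = [] then 0
       else [:0, -1, 1:] * lcat (replicate (k + l) X) (tharm w1 w2) v))"

definition hmul :: "hel \<Rightarrow> hel \<Rightarrow> hel" where
  "hmul A B = (\<lambda>v. \<Sum>a\<in>supp A. \<Sum>b\<in>supp B. A a * B b * tharm (dec a) (dec b) v)"

type_synonym hser = "nat \<Rightarrow> hel"

definition smul :: "hser \<Rightarrow> hser \<Rightarrow> hser" where
  "smul S T = (\<lambda>n v. \<Sum>i\<le>n. hmul (S i) (T (n - i)) v)"

definition sone :: hser where
  "sone = (\<lambda>n. if n = 0 then wmon [] else (\<lambda>v. 0))"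

fun spow :: "hser \<Rightarrow> nat \<Rightarrow> hser" where
  "spow S 0 = sone"
| "spow S (Suc m) = smul S (spow S m)"

text \<open>exp_{*t}(S) = sum_m S^{*m}/m!, coefficientwise in u; for S with zero
  constant term, S^{*m} only contributes to u^n with n \<ge> m.\<close>
definition texp :: "hser \<Rightarrow> hser" where
  "texp S = (\<lambda>n v. \<Sum>m\<le>n. [: inverse (fact m) :] * spow S m n v)"

definition dpoly :: "nat \<Rightarrow> rat poly" where
  "dpoly n = [:0, 1:] ^ n - [:-1, 1:] ^ n"

text \<open>1/(1 - z_k u) = sum_n z_k^n u^n\<close>
definition geomser :: "nat \<Rightarrow> hser" where
  "geomser k = (\<lambda>n. wmon (zw (replicate n k)))"

definition logser :: "nat \<Rightarrow> hser" where
  "logser k = (\<lambda>n. if n = 0 then (\<lambda>v. 0)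
                   else (\<lambda>v. smult (1 / of_nat n) (dpoly n) * wmon (zw [n * k]) v))"

definition mzv :: "nat list \<Rightarrow> real" where
  "mzv ks = infsum (\<lambda>ms. \<Prod>j<length ks. 1 / real (ms ! j) ^ (ks ! j))
     {ms. length ms = length ks \<and> sorted_wrt (>) ms \<and> (\<forall>m\<in>set ms. m > 0)}"

text \<open>all sequences obtained by replacing each comma by a comma or a plus (with multiplicity)\<close>
fun merges :: "nat list \<Rightarrow> nat list list" where
  "merges [] = [[]]"
| "merges [a] = [[a]]"
| "merges (a # b # r) =
     map (\<lambda>p. a # p) (merges (b # r)) @ map (\<lambda>p. (a + hd p) # tl p) (merges (b # r))"

definition zeta_t :: "nat list \<Rightarrow> real \<Rightarrow> real" where
  "zeta_t ks t = sum_list (map (\<lambda>p. t ^ (length ks - length p) * mzv p) (merges ks))"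

end

theory Submission
  imports Defs "HOL-Library.Poly_Mapping"
begin

(* Evaluate h^1_t in a commutative Q[t]-algebra by sending z_(k_1)...z_(k_n) to the truncated
   interpolated multiple harmonic sum in variables x(m). This evaluation turns *_t into the ordinary
   product, so both sides of the first identity become power series F in u with F(0) = 1 and
   F' = F H, where H = sum_n d_(n+1)(t) (sum_(m <= N) x(m)^((n+1)k)) u^n: for 1/(1 - z_k u) because
   each index m contributes the factor 1 + y u / (1 - t y u), y = x(m)^k, whose logarithmic derivative
   is sum_n d_(n+1)(t) y^(n+1) u^n. With formal variables x(m) the evaluation is injective on h^1_t,
   which gives the identity in h^1_t. For x(m) = 1/m the truncated sums tend to zeta^t as N -> oo, and
   the differential equation passes to the limit. *)

section \<open>Truncated interpolated multiple harmonic sums\<close>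

text \<open>\<open>tmhs x \<tau> [k\<^sub>1, \<dots>, k\<^sub>n] N\<close> is the sum over \<open>N \<ge> m\<^sub>1 \<ge> \<dots> \<ge> m\<^sub>n \<ge> 1\<close> of
  \<open>\<tau>\<^sup>e x m\<^sub>1 ^ k\<^sub>1 \<cdots> x m\<^sub>n ^ k\<^sub>n\<close>, where \<open>e\<close> is the number of equalities \<open>m\<^sub>i = m\<^sub>i\<^sub>+\<^sub>1\<close>;
  \<open>tmhs_top x \<tau> ks m\<close> is the part with \<open>m\<^sub>1 = m\<close>.\<close>

fun tmhs_top :: "(nat \<Rightarrow> 'a::comm_ring_1) \<Rightarrow> 'a \<Rightarrow> nat list \<Rightarrow> nat \<Rightarrow> 'a" where
  "tmhs_top x \<tau> [] m = 0"
| "tmhs_top x \<tau> (k # ks) m =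
     x m ^ k * ((if ks = [] then 1 else 0) + (\<Sum>j\<in>{1..<m}. tmhs_top x \<tau> ks j) + \<tau> * tmhs_top x \<tau> ks m)"

definition tmhs :: "(nat \<Rightarrow> 'a::comm_ring_1) \<Rightarrow> 'a \<Rightarrow> nat list \<Rightarrow> nat \<Rightarrow> 'a" where
  "tmhs x \<tau> ks N = (if ks = [] then 1 else 0) + (\<Sum>m\<in>{1..N}. tmhs_top x \<tau> ks m)"

lemma tmhs_0: "tmhs x \<tau> ks 0 = (if ks = [] then 1 else 0)"
  by (simp add: tmhs_def)

lemma tmhs_Suc: "tmhs x \<tau> ks (Suc N) = tmhs x \<tau> ks N + tmhs_top x \<tau> ks (Suc N)"
  by (simp add: tmhs_def)

lemma tmhs_Nil [simp]: "tmhs x \<tau> [] N = 1"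
  by (simp add: tmhs_def)

lemma tmhs_top_Cons: "tmhs_top x \<tau> (k # ks) m = x m ^ k * (tmhs x \<tau> ks (m - 1) + \<tau> * tmhs_top x \<tau> ks m)"
proof -
  have "{1..<m} = {1..m - 1}" by auto
  then show ?thesis by (simp add: tmhs_def)
qed

declare tmhs_top.simps(2) [simp del]

lemma tmhs_singleton: "tmhs x \<tau> [k] N = (\<Sum>m\<in>{1..N}. x m ^ k)"
  by (simp add: tmhs_def tmhs_top_Cons)

lemma tmhs_top_replicate:
  "tmhs_top x \<tau> (replicate (Suc n) k) m =
     (\<Sum>j\<le>n. \<tau> ^ j * (x m ^ k) ^ Suc j * tmhs x \<tau> (replicate (n - j) k) (m - 1))"
proof (induction n)
  case 0
  then show ?case by (simp add: tmhs_top_Cons)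
next
  case (Suc n)
  have "tmhs_top x \<tau> (replicate (Suc (Suc n)) k) m
      = x m ^ k * tmhs x \<tau> (replicate (Suc n) k) (m - 1) + \<tau> * x m ^ k * tmhs_top x \<tau> (replicate (Suc n) k) m"
    by (simp add: tmhs_top_Cons algebra_simps)
  also have "\<dots> = x m ^ k * tmhs x \<tau> (replicate (Suc n) k) (m - 1)
      + (\<Sum>j\<le>n. \<tau> ^ Suc j * (x m ^ k) ^ Suc (Suc j) * tmhs x \<tau> (replicate (n - j) k) (m - 1))"
    unfolding Suc sum_distrib_left by (simp add: algebra_simps)
  also have "\<dots> = (\<Sum>j\<le>Suc n. \<tau> ^ j * (x m ^ k) ^ Suc j * tmhs x \<tau> (replicate (Suc n - j) k) (m - 1))"
    by (subst sum.atMost_Suc_shift) simp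
  finally show ?case .
qed

lemma zw_Nil [simp]: "zw [] = []"
  by (simp add: zw_def)

lemma zw_Cons: "zw (k # ks) = replicate (k - 1) X @ Y # zw ks"
  by (simp add: zw_def)

lemma zw_Cons_append: "zw (k # ks) = zw [k] @ zw ks"
  by (simp add: zw_def)

lemma zw_eq_Nil_iff [simp]: "zw ks = [] \<longleftrightarrow> ks = []"
  by (cases ks) (auto simp: zw_def)

lemma dec_replicate_X_append:
  "dec (replicate j X @ w) = (case dec w of [] \<Rightarrow> [] | c # r \<Rightarrow> (c + j) # r)"
  by (induction j) (auto split: list.splits)

lemma dec_zw_append: "0 < k \<Longrightarrow> dec (zw [k] @ w) = k # dec w"
  by (simp add: zw_Cons dec_replicate_X_append)

lemma dec_zw: "0 \<notin> set ks \<Longrightarrow> dec (zw ks) = ks"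
  by (induction ks) (auto simp: zw_Cons dec_replicate_X_append)

lemma zero_notin_dec: "0 \<notin> set (dec w)"
  by (induction w rule: dec.induct) (simp_all split: list.splits, metis list.set_intros(2))

lemma supp_add_subset: "supp (\<lambda>v. F v + G v) \<subseteq> supp F \<union> supp G"
  by (auto simp: supp_def)

lemma supp_diff_subset: "supp (\<lambda>v. F v - G v) \<subseteq> supp F \<union> supp G"
  by (auto simp: supp_def)

lemma supp_cmult_subset: "supp (\<lambda>v. c * F v) \<subseteq> supp F"
  by (auto simp: supp_def)

lemma supp_sum_subset: "supp (\<lambda>v. \<Sum>i\<in>I. F i v) \<subseteq> (\<Union>i\<in>I. supp (F i))"
  by (auto simp: supp_def intro: sum.neutral)

lemma supp_zero [simp]: "supp (\<lambda>v. 0) = {}"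
  by (simp add: supp_def)

lemma supp_wmon [simp]: "supp (wmon w) = {w}"
  by (auto simp: supp_def wmon_def)

lemma supp_lcat: "supp (lcat p F) = (\<lambda>w. p @ w) ` supp F"
proof (intro equalityI subsetI)
  fix v assume "v \<in> supp (lcat p F)"
  then have "take (length p) v = p" "drop (length p) v \<in> supp F"
    by (auto simp: supp_def lcat_def split: if_splits)
  then show "v \<in> (\<lambda>w. p @ w) ` supp F"
    by (metis append_take_drop_id image_eqI)
qed (auto simp: supp_def lcat_def)

lemma supp_tharm_Cons:
  "supp (tharm (k # w1) (l # w2)) \<subseteq>
     supp (lcat (zw [k]) (tharm w1 (l # w2))) \<union> supp (lcat (zw [l]) (tharm (k # w1) w2))
   \<union> supp (lcat (zw [k + l]) (tharm w1 w2))
   \<union> (if w1 = [] \<and> w2 = [] then {} else supp (lcat (replicate (k + l) X) (tharm w1 w2)))"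
  by (auto simp: supp_def)

lemma supp_hmul_subset: "supp (hmul A B) \<subseteq> (\<Union>a\<in>supp A. \<Union>b\<in>supp B. supp (tharm (dec a) (dec b)))"
proof
  fix v assume "v \<in> supp (hmul A B)"
  then obtain a where a: "a \<in> supp A" "(\<Sum>b\<in>supp B. A a * B b * tharm (dec a) (dec b) v) \<noteq> 0"
    unfolding supp_def hmul_def by (auto intro: sum.neutral)
  then obtain b where "b \<in> supp B" "A a * B b * tharm (dec a) (dec b) v \<noteq> 0"
    by (meson sum.neutral)
  with a show "v \<in> (\<Union>a\<in>supp A. \<Union>b\<in>supp B. supp (tharm (dec a) (dec b)))"
    by (auto simp: supp_def)
qed

lemma finite_supp_tharm: "finite (supp (tharm a b))"
proof (induction a b rule: tharm.induct)
  case (3 k w1 l w2)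
  show ?case
    by (rule finite_subset[OF supp_tharm_Cons]) (use 3 in \<open>simp add: supp_lcat\<close>)
qed simp_all

lemma finite_supp_add: "finite (supp F) \<Longrightarrow> finite (supp G) \<Longrightarrow> finite (supp (\<lambda>v. F v + G v))"
  by (rule finite_subset[OF supp_add_subset]) simp

lemma finite_supp_diff: "finite (supp F) \<Longrightarrow> finite (supp G) \<Longrightarrow> finite (supp (\<lambda>v. F v - G v))"
  by (rule finite_subset[OF supp_diff_subset]) simp

lemma finite_supp_wmon: "finite (supp (wmon w))"
  by simp

lemma finite_supp_cmult: "finite (supp F) \<Longrightarrow> finite (supp (\<lambda>v. c * F v))"
  by (rule finite_subset[OF supp_cmult_subset])

lemma finite_supp_sum:
  "finite I \<Longrightarrow> (\<And>i. i \<in> I \<Longrightarrow> finite (supp (F i))) \<Longrightarrow> finite (supp (\<lambda>v. \<Sum>i\<in>I. F i v))"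
  by (rule finite_subset[OF supp_sum_subset]) auto

lemma finite_supp_hmul: "finite (supp A) \<Longrightarrow> finite (supp B) \<Longrightarrow> finite (supp (hmul A B))"
  by (rule finite_subset[OF supp_hmul_subset]) (simp add: finite_supp_tharm)

lemma finite_supp_smul:
  "(\<And>i. finite (supp (S i))) \<Longrightarrow> (\<And>i. finite (supp (T i))) \<Longrightarrow> finite (supp (smul S T n))"
  unfolding smul_def by (intro finite_supp_sum finite_supp_hmul) auto

lemma finite_supp_spow: "(\<And>i. finite (supp (S i))) \<Longrightarrow> finite (supp (spow S m n))"
  by (induction m arbitrary: n) (simp_all add: sone_def finite_supp_smul)

lemma finite_supp_texp: "(\<And>i. finite (supp (S i))) \<Longrightarrow> finite (supp (texp S n))"
  unfolding texp_def by (intro finite_supp_sum finite_supp_cmult finite_supp_spow) auto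

lemma finite_supp_logser: "finite (supp (logser k n))"
proof (cases "n = 0")
  case False
  then show ?thesis
    unfolding logser_def by (simp only: if_False) (rule finite_supp_cmult, simp)
qed (simp add: logser_def)

lemma finite_supp_geomser: "finite (supp (geomser k n))"
  by (simp add: geomser_def)

text \<open>The words of \<open>h\<^sup>1\<^sub>t\<close> (the empty word and the words ending in \<open>y\<close>) are those fixed by \<open>zw \<circ> dec\<close>.\<close>

definition h1_word :: "word \<Rightarrow> bool" where
  "h1_word w \<longleftrightarrow> zw (dec w) = w"

lemma h1_word_Nil: "h1_word []"
  by (simp add: h1_word_def)

lemma h1_word_zw: "0 \<notin> set ks \<Longrightarrow> h1_word (zw ks)"
  by (simp add: h1_word_def dec_zw)

lemma h1_word_zw_append: "0 < c \<Longrightarrow> h1_word w \<Longrightarrow> h1_word (zw [c] @ w)"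
  unfolding h1_word_def by (metis dec_zw_append zw_Cons_append)

lemma h1_word_replicate_X_append:
  assumes "w \<noteq> []" "h1_word w"
  shows "h1_word (replicate j X @ w)"
proof -
  obtain c r where cr: "dec w = c # r"
    using assms by (cases "dec w") (auto simp: h1_word_def)
  have "0 < c"
    using zero_notin_dec[of w] cr by auto
  then have "zw ((c + j) # r) = replicate j X @ zw (c # r)"
    by (simp add: zw_Cons replicate_add[symmetric] add.commute)
  then show ?thesis
    using assms(2) cr by (simp add: h1_word_def dec_replicate_X_append)
qed

lemma supp_tharm_h1:
  "0 \<notin> set a \<Longrightarrow> 0 \<notin> set b \<Longrightarrow> w \<in> supp (tharm a b) \<Longrightarrow> h1_word w \<and> (w = [] \<longrightarrow> a = [] \<and> b = [])"
proof (induction a b arbitrary: w rule: tharm.induct)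
  case (3 k w1 l w2)
  have k: "0 < k" and l: "0 < l" and w1: "0 \<notin> set w1" and w2: "0 \<notin> set w2"
    using "3.prems" by auto
  note w = subsetD[OF supp_tharm_Cons "3.prems"(3)]
  from w consider
      (left) w' where "w = zw [k] @ w'" "w' \<in> supp (tharm w1 (l # w2))"
    | (right) w' where "w = zw [l] @ w'" "w' \<in> supp (tharm (k # w1) w2)"
    | (merged) w' where "w = zw [k + l] @ w'" "w' \<in> supp (tharm w1 w2)"
    | (square) w' where "w = replicate (k + l) X @ w'" "w' \<in> supp (tharm w1 w2)" "w1 \<noteq> [] \<or> w2 \<noteq> []"
    unfolding supp_lcat by (auto split: if_splits simp del: tharm.simps)
  then show ?case
  proof cases
    case left
    then show ?thesis using "3.IH"(1)[OF w1 "3.prems"(2)] k by (simp add: h1_word_zw_append)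
  next
    case right
    then show ?thesis using "3.IH"(2)[OF "3.prems"(1) w2] l by (simp add: h1_word_zw_append)
  next
    case merged
    then show ?thesis using "3.IH"(3)[OF w1 w2] k by (simp add: h1_word_zw_append)
  next
    case square
    then show ?thesis using "3.IH"(3)[OF w1 w2] by (auto intro: h1_word_replicate_X_append)
  qed
qed (auto simp: h1_word_zw)

lemma supp_hmul_h1: "supp (hmul A B) \<subseteq> {w. h1_word w}"
  using supp_hmul_subset supp_tharm_h1[OF zero_notin_dec zero_notin_dec] by blast

lemma supp_texp_h1: "supp (texp S n) \<subseteq> {w. h1_word w}"
proof -
  have spow: "supp (spow S m n) \<subseteq> {w. h1_word w}" for m
  proof (cases m)
    case 0
    then show ?thesis by (simp add: sone_def h1_word_Nil)
  next
    case (Suc m')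
    have "supp (spow S m n) \<subseteq> (\<Union>i\<le>n. supp (hmul (S i) (spow S m' (n - i))))"
      unfolding Suc spow.simps smul_def by (rule supp_sum_subset)
    then show ?thesis using supp_hmul_h1 by blast
  qed
  have "supp (texp S n) \<subseteq> (\<Union>m\<le>n. supp (\<lambda>v. [:inverse (fact m):] * spow S m n v))"
    unfolding texp_def by (rule supp_sum_subset)
  then show ?thesis using spow supp_cmult_subset by blast
qed

lemma supp_geomser_h1: "0 < k \<Longrightarrow> supp (geomser k n) \<subseteq> {w. h1_word w}"
  by (simp add: geomser_def h1_word_zw)

definition hel_eval :: "(rat poly \<Rightarrow> 'a::comm_ring_1) \<Rightarrow> (word \<Rightarrow> 'a) \<Rightarrow> hel \<Rightarrow> 'a" where
  "hel_eval \<iota> h F = (\<Sum>w\<in>supp F. \<iota> (F w) * h w)"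

lemma hel_eval_fun_add: "hel_eval \<iota> (\<lambda>w. h1 w + h2 w) F = hel_eval \<iota> h1 F + hel_eval \<iota> h2 F"
  by (simp add: hel_eval_def algebra_simps sum.distrib)

lemma hel_eval_fun_cmult: "hel_eval \<iota> (\<lambda>w. c * h w) F = c * hel_eval \<iota> h F"
  by (simp add: hel_eval_def algebra_simps sum_distrib_left)

lemma hel_eval_fun_zero: "hel_eval \<iota> (\<lambda>w. 0) F = 0"
  by (simp add: hel_eval_def)

lemma hel_eval_zero [simp]: "hel_eval \<iota> h (\<lambda>v. 0) = 0"
  by (simp add: hel_eval_def)

lemma hel_eval_lcat: "hel_eval \<iota> h (lcat p F) = hel_eval \<iota> (\<lambda>w. h (p @ w)) F"
  unfolding hel_eval_def supp_lcat by (subst sum.reindex) (auto simp: inj_on_def lcat_def)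

locale rat_poly_hom =
  fixes \<iota> :: "rat poly \<Rightarrow> 'a::comm_ring_1"
  assumes hom_add: "\<iota> (a + b) = \<iota> a + \<iota> b"
    and hom_mult: "\<iota> (a * b) = \<iota> a * \<iota> b"
    and hom_one: "\<iota> 1 = 1"
begin

lemma hom_zero [simp]: "\<iota> 0 = 0"
  using hom_add[of 0 0] by simp

lemma hom_uminus: "\<iota> (- a) = - \<iota> a"
  using hom_add[of a "- a"] by (simp add: add_eq_0_iff)

lemma hom_diff: "\<iota> (a - b) = \<iota> a - \<iota> b"
  using hom_add[of a "- b"] by (simp add: hom_uminus)

lemma hom_sum: "\<iota> (\<Sum>i\<in>I. f i) = (\<Sum>i\<in>I. \<iota> (f i))"
  by (induction I rule: infinite_finite_induct) (auto simp: hom_add)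

lemma hom_power: "\<iota> (a ^ n) = \<iota> a ^ n"
  by (induction n) (auto simp: hom_mult hom_one)

lemma hom_of_nat: "\<iota> (of_nat n) = of_nat n"
  by (induction n) (auto simp: hom_add hom_one)

lemma of_nat_Suc_mult_hom_smult: "of_nat (Suc n) * \<iota> (smult (1 / of_nat (Suc n)) p) = \<iota> p"
proof -
  have "of_nat (Suc n) * smult (1 / of_nat (Suc n)) p = p"
    by (simp add: of_nat_poly del: of_nat_Suc)
  then show ?thesis
    by (simp only: hom_mult[symmetric] hom_of_nat[symmetric])
qed

lemma of_nat_Suc_mult_cancel:
  assumes "of_nat (Suc n) * (a :: 'a) = 0"
  shows "a = 0"
proof -
  have "a = (of_nat (Suc n) * \<iota> (smult (1 / of_nat (Suc n)) 1)) * a"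
    by (simp only: of_nat_Suc_mult_hom_smult hom_one mult_1_left)
  also have "\<dots> = \<iota> (smult (1 / of_nat (Suc n)) 1) * (of_nat (Suc n) * a)"
    by (simp only: mult_ac)
  finally show ?thesis
    by (simp only: assms mult_zero_right)
qed

definition tvar :: 'a where
  "tvar = \<iota> [:0, 1:]"

lemma hom_pCons_1_minus_2: "\<iota> [:1, -2:] = 1 - 2 * tvar"
proof -
  have "[:1, -2:] = 1 - [:0, 1:] - [:0, 1 :: rat:]"
    by (simp add: one_pCons)
  then have "\<iota> [:1, -2:] = 1 - tvar - tvar"
    by (simp only: hom_diff hom_one tvar_def)
  then show ?thesis
    by (simp add: mult_2 algebra_simps)
qed

lemma hom_pCons_0_minus_1_1: "\<iota> [:0, -1, 1:] = tvar ^ 2 - tvar"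
proof -
  have "[:0, -1, 1:] = [:0, 1 :: rat:] ^ 2 - [:0, 1:]"
    by (simp add: power2_eq_square)
  then show ?thesis
    by (simp add: hom_diff hom_power tvar_def)
qed

lemma hom_dpoly: "\<iota> (dpoly n) = tvar ^ n - (tvar - 1) ^ n"
proof -
  have "[:-1, 1:] = [:0, 1:] - (1 :: rat poly)"
    by (simp add: one_pCons)
  then show ?thesis
    by (simp add: dpoly_def hom_diff hom_power hom_one tvar_def)
qed

lemma hel_eval_superset:
  "finite S \<Longrightarrow> supp F \<subseteq> S \<Longrightarrow> hel_eval \<iota> h F = (\<Sum>w\<in>S. \<iota> (F w) * h w)"
  unfolding hel_eval_def by (rule sum.mono_neutral_left) (auto simp: supp_def)

lemma hel_eval_add:
  assumes "finite (supp F)" "finite (supp G)"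
  shows "hel_eval \<iota> h (\<lambda>v. F v + G v) = hel_eval \<iota> h F + hel_eval \<iota> h G"
proof -
  let ?S = "supp F \<union> supp G"
  have "hel_eval \<iota> h (\<lambda>v. F v + G v) = (\<Sum>w\<in>?S. \<iota> (F w) * h w) + (\<Sum>w\<in>?S. \<iota> (G w) * h w)"
    using assms supp_add_subset
    by (simp add: hel_eval_superset[of ?S] hom_add algebra_simps sum.distrib)
  also have "\<dots> = hel_eval \<iota> h F + hel_eval \<iota> h G"
    using assms by (simp add: hel_eval_superset[of ?S])
  finally show ?thesis .
qed

lemma hel_eval_diff:
  assumes "finite (supp F)" "finite (supp G)"
  shows "hel_eval \<iota> h (\<lambda>v. F v - G v) = hel_eval \<iota> h F - hel_eval \<iota> h G"
proof -
  let ?S = "supp F \<union> supp G"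
  have "hel_eval \<iota> h (\<lambda>v. F v - G v) = (\<Sum>w\<in>?S. \<iota> (F w) * h w) - (\<Sum>w\<in>?S. \<iota> (G w) * h w)"
    using assms supp_diff_subset
    by (simp add: hel_eval_superset[of ?S] hom_diff algebra_simps sum_subtractf)
  also have "\<dots> = hel_eval \<iota> h F - hel_eval \<iota> h G"
    using assms by (simp add: hel_eval_superset[of ?S])
  finally show ?thesis .
qed

lemma hel_eval_cmult:
  assumes "finite (supp F)"
  shows "hel_eval \<iota> h (\<lambda>v. c * F v) = \<iota> c * hel_eval \<iota> h F"
proof -
  have "hel_eval \<iota> h (\<lambda>v. c * F v) = (\<Sum>w\<in>supp F. \<iota> (c * F w) * h w)"
    using assms supp_cmult_subset by (rule hel_eval_superset)
  then show ?thesis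
    by (simp add: hel_eval_def hom_mult sum_distrib_left algebra_simps)
qed

lemma hel_eval_sum:
  assumes "finite I" "\<And>i. i \<in> I \<Longrightarrow> finite (supp (F i))"
  shows "hel_eval \<iota> h (\<lambda>v. \<Sum>i\<in>I. F i v) = (\<Sum>i\<in>I. hel_eval \<iota> h (F i))"
proof -
  let ?S = "\<Union>i\<in>I. supp (F i)"
  have S: "finite ?S"
    using assms by auto
  have "hel_eval \<iota> h (\<lambda>v. \<Sum>i\<in>I. F i v) = (\<Sum>w\<in>?S. \<iota> (\<Sum>i\<in>I. F i w) * h w)"
    using S supp_sum_subset by (rule hel_eval_superset)
  also have "\<dots> = (\<Sum>i\<in>I. \<Sum>w\<in>?S. \<iota> (F i w) * h w)"
    by (simp add: hom_sum sum_distrib_right) (rule sum.swap)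
  also have "\<dots> = (\<Sum>i\<in>I. hel_eval \<iota> h (F i))"
    using S by (intro sum.cong refl hel_eval_superset[symmetric]) auto
  finally show ?thesis .
qed

lemma hel_eval_wmon: "hel_eval \<iota> h (wmon w) = h w"
  by (simp add: hel_eval_def) (simp add: wmon_def hom_one)

lemma hel_eval_tharm_Cons:
  "hel_eval \<iota> h (tharm (k # w1) (l # w2)) =
     hel_eval \<iota> h (lcat (zw [k]) (tharm w1 (l # w2))) + hel_eval \<iota> h (lcat (zw [l]) (tharm (k # w1) w2))
   + (1 - 2 * tvar) * hel_eval \<iota> h (lcat (zw [k + l]) (tharm w1 w2))
   + (if w1 = [] \<and> w2 = [] then 0 else tvar ^ 2 - tvar) * hel_eval \<iota> h (lcat (replicate (k + l) X) (tharm w1 w2))"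
proof -
  let ?c = "if w1 = [] \<and> w2 = [] then 0 else [:0, -1, 1:]"
  have fin: "finite (supp (lcat p (tharm a b)))" for p a b
    by (simp add: supp_lcat finite_supp_tharm)
  have "tharm (k # w1) (l # w2) = (\<lambda>v.
      lcat (zw [k]) (tharm w1 (l # w2)) v + lcat (zw [l]) (tharm (k # w1) w2) v
    + [:1, -2:] * lcat (zw [k + l]) (tharm w1 w2) v + ?c * lcat (replicate (k + l) X) (tharm w1 w2) v)"
  proof (cases "w1 = [] \<and> w2 = []")
    case True
    show ?thesis by (simp only: tharm.simps(3) True simp_thms if_True mult_zero_left)
  next
    case False
    show ?thesis by (simp only: tharm.simps(3) False if_False)
  qed
  moreover have "\<iota> ?c = (if w1 = [] \<and> w2 = [] then 0 else tvar ^ 2 - tvar)"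
    by (simp add: hom_pCons_0_minus_1_1)
  ultimately show ?thesis
    by (simp only: hel_eval_add hel_eval_cmult hom_pCons_1_minus_2 fin finite_supp_add finite_supp_cmult)
qed

end

section \<open>Evaluation at truncated sums turns \<open>\<ast>\<^sub>t\<close> into multiplication\<close>

lemma tmhs_top_dec_replicate_X_append:
  "tmhs_top x \<tau> (dec (replicate j X @ w)) m = x m ^ j * tmhs_top x \<tau> (dec w) m"
  by (cases "dec w") (simp_all add: dec_replicate_X_append tmhs_top_Cons power_add algebra_simps)

lemma tmhs_0_dec_replicate_X_append: "tmhs x \<tau> (dec (replicate j X @ w)) 0 = tmhs x \<tau> (dec w) 0"
  by (cases "dec w") (simp_all add: dec_replicate_X_append tmhs_0)

context rat_poly_hom
begin

definition tmhs_eval :: "(nat \<Rightarrow> 'a) \<Rightarrow> nat \<Rightarrow> hel \<Rightarrow> 'a" where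
  "tmhs_eval x N F = hel_eval \<iota> (\<lambda>w. tmhs x tvar (dec w) N) F"

definition tmhs_top_eval :: "(nat \<Rightarrow> 'a) \<Rightarrow> nat \<Rightarrow> hel \<Rightarrow> 'a" where
  "tmhs_top_eval x m F = hel_eval \<iota> (\<lambda>w. tmhs_top x tvar (dec w) m) F"

lemma tmhs_eval_Suc: "tmhs_eval x (Suc N) F = tmhs_eval x N F + tmhs_top_eval x (Suc N) F"
  unfolding tmhs_eval_def tmhs_top_eval_def tmhs_Suc by (rule hel_eval_fun_add)

lemma tmhs_eval_cmult: "finite (supp F) \<Longrightarrow> tmhs_eval x N (\<lambda>v. c * F v) = \<iota> c * tmhs_eval x N F"
  unfolding tmhs_eval_def by (rule hel_eval_cmult)

lemma tmhs_eval_diff: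
  "finite (supp F) \<Longrightarrow> finite (supp G) \<Longrightarrow> tmhs_eval x N (\<lambda>v. F v - G v) = tmhs_eval x N F - tmhs_eval x N G"
  unfolding tmhs_eval_def by (rule hel_eval_diff)

lemma tmhs_eval_sum:
  "finite I \<Longrightarrow> (\<And>i. i \<in> I \<Longrightarrow> finite (supp (F i))) \<Longrightarrow>
    tmhs_eval x N (\<lambda>v. \<Sum>i\<in>I. F i v) = (\<Sum>i\<in>I. tmhs_eval x N (F i))"
  unfolding tmhs_eval_def by (rule hel_eval_sum)

lemma tmhs_eval_tharm_Cons:
  "tmhs_eval x N (tharm (k # w1) (l # w2)) =
     tmhs_eval x N (lcat (zw [k]) (tharm w1 (l # w2))) + tmhs_eval x N (lcat (zw [l]) (tharm (k # w1) w2))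
   + (1 - 2 * tvar) * tmhs_eval x N (lcat (zw [k + l]) (tharm w1 w2))
   + (if w1 = [] \<and> w2 = [] then 0 else tvar ^ 2 - tvar) * tmhs_eval x N (lcat (replicate (k + l) X) (tharm w1 w2))"
  unfolding tmhs_eval_def by (rule hel_eval_tharm_Cons)

lemma tmhs_top_eval_tharm_Cons:
  "tmhs_top_eval x m (tharm (k # w1) (l # w2)) =
     tmhs_top_eval x m (lcat (zw [k]) (tharm w1 (l # w2))) + tmhs_top_eval x m (lcat (zw [l]) (tharm (k # w1) w2))
   + (1 - 2 * tvar) * tmhs_top_eval x m (lcat (zw [k + l]) (tharm w1 w2))
   + (if w1 = [] \<and> w2 = [] then 0 else tvar ^ 2 - tvar) * tmhs_top_eval x m (lcat (replicate (k + l) X) (tharm w1 w2))"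
  unfolding tmhs_top_eval_def by (rule hel_eval_tharm_Cons)

lemma tmhs_eval_wmon: "0 \<notin> set ks \<Longrightarrow> tmhs_eval x N (wmon (zw ks)) = tmhs x tvar ks N"
  by (simp add: tmhs_eval_def hel_eval_wmon dec_zw)

lemma tmhs_top_eval_wmon: "0 \<notin> set ks \<Longrightarrow> tmhs_top_eval x m (wmon (zw ks)) = tmhs_top x tvar ks m"
  by (simp add: tmhs_top_eval_def hel_eval_wmon dec_zw)

lemma tmhs_top_eval_lcat_zw:
  assumes "0 < k"
  shows "tmhs_top_eval x m (lcat (zw [k]) F) = x m ^ k * (tmhs_eval x (m - 1) F + tvar * tmhs_top_eval x m F)"
proof -
  have "tmhs_top_eval x m (lcat (zw [k]) F) = hel_eval \<iota>
      (\<lambda>w. x m ^ k * tmhs x tvar (dec w) (m - 1) + (x m ^ k * tvar) * tmhs_top x tvar (dec w) m) F"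
    unfolding tmhs_top_eval_def hel_eval_lcat
    by (simp add: dec_zw_append[OF assms] tmhs_top_Cons algebra_simps)
  also have "\<dots> = x m ^ k * (tmhs_eval x (m - 1) F + tvar * tmhs_top_eval x m F)"
    by (simp add: hel_eval_fun_add hel_eval_fun_cmult tmhs_eval_def tmhs_top_eval_def algebra_simps)
  finally show ?thesis .
qed

lemma tmhs_top_eval_lcat_X: "tmhs_top_eval x m (lcat (replicate j X) F) = x m ^ j * tmhs_top_eval x m F"
  unfolding tmhs_top_eval_def hel_eval_lcat tmhs_top_dec_replicate_X_append by (rule hel_eval_fun_cmult)

lemma tmhs_eval_0_lcat_zw: "0 < k \<Longrightarrow> tmhs_eval x 0 (lcat (zw [k]) F) = 0"
  by (simp add: tmhs_eval_def hel_eval_lcat dec_zw_append tmhs_0 hel_eval_fun_zero)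

lemma tmhs_eval_0_lcat_X: "tmhs_eval x 0 (lcat (replicate j X) F) = tmhs_eval x 0 F"
  by (simp add: tmhs_eval_def hel_eval_lcat tmhs_0_dec_replicate_X_append)

lemma tmhs_eval_eq_product_if_top:
  assumes top: "\<And>m. tmhs_top_eval x m F = tmhs_top x tvar a m * tmhs x tvar b (m - 1)
      + tmhs x tvar a (m - 1) * tmhs_top x tvar b m + tmhs_top x tvar a m * tmhs_top x tvar b m"
    and zero: "tmhs_eval x 0 F = tmhs x tvar a 0 * tmhs x tvar b 0"
  shows "tmhs_eval x N F = tmhs x tvar a N * tmhs x tvar b N"
  by (induction N) (simp_all add: zero tmhs_eval_Suc top tmhs_Suc algebra_simps)

text \<open>The recursion of \<open>tharm\<close> evaluated on top parts: the left side collects the four terms of the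
  recursion after inserting the induction hypotheses, the right side is the top part of the product.\<close>

lemma tharm_top_identity:
  fixes X Y Q1 Q2 E1 E2 t Qa Qb :: "'b::comm_ring_1"
  shows "X * (Q1 * Qb + t * (E1 * Qb + Q1 * (Y * (Q2 + t * E2)) + E1 * (Y * (Q2 + t * E2))))
   + Y * (Qa * Q2 + t * ((X * (Q1 + t * E1)) * Q2 + Qa * E2 + (X * (Q1 + t * E1)) * E2))
   + (1 - 2 * t) * (X * Y * (Q1 * Q2 + t * (E1 * Q2 + Q1 * E2 + E1 * E2)))
   + (t ^ 2 - t) * (X * Y * (E1 * Q2 + Q1 * E2 + E1 * E2))
   = (X * (Q1 + t * E1)) * Qb + Qa * (Y * (Q2 + t * E2)) + (X * (Q1 + t * E1)) * (Y * (Q2 + t * E2))"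
  by (simp add: algebra_simps power2_eq_square)

text \<open>Multiplicativity is proved together with a formula for the top parts, on which the recursion
  of \<open>tharm\<close> acts.\<close>

lemma tmhs_eval_tharm_with_top:
  "0 \<notin> set a \<Longrightarrow> 0 \<notin> set b \<Longrightarrow>
    (\<forall>m. tmhs_top_eval x m (tharm a b) = tmhs_top x tvar a m * tmhs x tvar b (m - 1)
        + tmhs x tvar a (m - 1) * tmhs_top x tvar b m + tmhs_top x tvar a m * tmhs_top x tvar b m)
  \<and> (\<forall>N. tmhs_eval x N (tharm a b) = tmhs x tvar a N * tmhs x tvar b N)"
proof (induction a b rule: tharm.induct)
  case (1 w)
  then show ?case by (simp add: tmhs_eval_wmon tmhs_top_eval_wmon)
next
  case (2 k w)
  then show ?case by (simp add: tmhs_eval_wmon tmhs_top_eval_wmon del: set_simps)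
next
  case (3 k w1 l w2)
  have k: "0 < k" and l: "0 < l" and w1: "0 \<notin> set w1" and w2: "0 \<notin> set w2"
    using "3.prems" by auto
  note IH1 = "3.IH"(1)[OF w1 "3.prems"(2)]
  note IH2 = "3.IH"(2)[OF "3.prems"(1) w2]
  note IH3 = "3.IH"(3)[OF w1 w2]
  let ?Q = "\<lambda>ks N. tmhs x tvar ks N" and ?E = "\<lambda>ks m. tmhs_top x tvar ks m"
  let ?T1 = "tharm w1 (l # w2)" and ?T2 = "tharm (k # w1) w2" and ?T3 = "tharm w1 w2"
  have top: "tmhs_top_eval x m (tharm (k # w1) (l # w2)) = ?E (k # w1) m * ?Q (l # w2) (m - 1)
      + ?Q (k # w1) (m - 1) * ?E (l # w2) m + ?E (k # w1) m * ?E (l # w2) m" for m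
  proof -
    have square: "(if w1 = [] \<and> w2 = [] then 0 else tvar ^ 2 - tvar)
        * tmhs_top_eval x m (lcat (replicate (k + l) X) (tharm w1 w2))
        = (tvar ^ 2 - tvar) * (x m ^ (k + l) * tmhs_top_eval x m (tharm w1 w2))"
      using IH3 by (auto simp: tmhs_top_eval_lcat_X)
    have "tmhs_top_eval x m (tharm (k # w1) (l # w2)) =
        x m ^ k * (tmhs_eval x (m - 1) ?T1 + tvar * tmhs_top_eval x m ?T1)
      + x m ^ l * (tmhs_eval x (m - 1) ?T2 + tvar * tmhs_top_eval x m ?T2)
      + (1 - 2 * tvar) * (x m ^ (k + l) * (tmhs_eval x (m - 1) ?T3 + tvar * tmhs_top_eval x m ?T3))
      + (tvar ^ 2 - tvar) * (x m ^ (k + l) * tmhs_top_eval x m ?T3)"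
      unfolding tmhs_top_eval_tharm_Cons square
      using k l by (simp add: tmhs_top_eval_lcat_zw)
    also have "\<dots> = ?E (k # w1) m * ?Q (l # w2) (m - 1) + ?Q (k # w1) (m - 1) * ?E (l # w2) m
        + ?E (k # w1) m * ?E (l # w2) m"
      using IH1 IH2 IH3 unfolding tmhs_top_Cons power_add by (simp only: tharm_top_identity)
    finally show ?thesis .
  qed
  have "tmhs_eval x 0 (tharm (k # w1) (l # w2))
      = (if w1 = [] \<and> w2 = [] then 0 else tvar ^ 2 - tvar) * tmhs_eval x 0 (tharm w1 w2)"
    unfolding tmhs_eval_tharm_Cons using k l by (simp add: tmhs_eval_0_lcat_zw tmhs_eval_0_lcat_X)
  also have "\<dots> = ?Q (k # w1) 0 * ?Q (l # w2) 0"
    using IH3 by (auto simp: tmhs_0)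
  finally have "tmhs_eval x N (tharm (k # w1) (l # w2)) = ?Q (k # w1) N * ?Q (l # w2) N" for N
    by (rule tmhs_eval_eq_product_if_top[OF top])
  with top show ?case
    by blast
qed

lemma tmhs_eval_tharm:
  "0 \<notin> set a \<Longrightarrow> 0 \<notin> set b \<Longrightarrow> tmhs_eval x N (tharm a b) = tmhs x tvar a N * tmhs x tvar b N"
  using tmhs_eval_tharm_with_top by blast

lemma tmhs_eval_hmul:
  assumes "finite (supp A)" "finite (supp B)"
  shows "tmhs_eval x N (hmul A B) = tmhs_eval x N A * tmhs_eval x N B"
proof -
  have "tmhs_eval x N (hmul A B)
      = (\<Sum>a\<in>supp A. \<Sum>b\<in>supp B. \<iota> (A a * B b) * tmhs_eval x N (tharm (dec a) (dec b)))"
    unfolding hmul_def using assms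
    by (simp add: tmhs_eval_sum tmhs_eval_cmult finite_supp_sum finite_supp_cmult finite_supp_tharm)
  also have "\<dots> = (\<Sum>a\<in>supp A. \<Sum>b\<in>supp B.
      \<iota> (A a) * tmhs x tvar (dec a) N * (\<iota> (B b) * tmhs x tvar (dec b) N))"
    by (simp add: tmhs_eval_tharm zero_notin_dec hom_mult algebra_simps)
  also have "\<dots> = tmhs_eval x N A * tmhs_eval x N B"
    by (simp add: tmhs_eval_def hel_eval_def sum_product)
  finally show ?thesis .
qed

lemma tmhs_eval_spow:
  assumes "\<And>i. finite (supp (S i))"
  shows "tmhs_eval x N (spow S m n) = fps_nth (Abs_fps (\<lambda>i. tmhs_eval x N (S i)) ^ m) n"
proof (induction m arbitrary: n)
  case 0
  then show ?case by (simp add: sone_def tmhs_eval_def hel_eval_wmon)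
next
  case (Suc m)
  have "tmhs_eval x N (spow S (Suc m) n) = (\<Sum>i\<le>n. tmhs_eval x N (hmul (S i) (spow S m (n - i))))"
    unfolding spow.simps smul_def
    by (rule tmhs_eval_sum) (simp_all add: finite_supp_hmul finite_supp_spow assms)
  also have "\<dots> = fps_nth (Abs_fps (\<lambda>i. tmhs_eval x N (S i)) ^ Suc m) n"
    by (simp add: tmhs_eval_hmul finite_supp_spow assms Suc fps_mult_nth atLeast0AtMost)
  finally show ?case .
qed

lemma tmhs_eval_texp:
  assumes "\<And>i. finite (supp (S i))"
  shows "tmhs_eval x N (texp S n) =
    (\<Sum>m\<le>n. \<iota> [:inverse (fact m):] * fps_nth (Abs_fps (\<lambda>i. tmhs_eval x N (S i)) ^ m) n)"
proof -
  have fin: "finite (supp (\<lambda>v. [:inverse (fact m):] * spow S m n v))" for m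
    by (rule finite_supp_cmult, rule finite_supp_spow, rule assms)
  have "tmhs_eval x N (texp S n) = (\<Sum>m\<le>n. tmhs_eval x N (\<lambda>v. [:inverse (fact m):] * spow S m n v))"
    unfolding texp_def by (rule tmhs_eval_sum) (simp_all only: finite_atMost fin)
  then show ?thesis
    by (simp only: tmhs_eval_cmult[OF finite_supp_spow[OF assms]] tmhs_eval_spow[OF assms])
qed

end

text \<open>\<open>interp_factor \<tau> y = 1 + y u / (1 - \<tau> y u)\<close> is the contribution of a single index \<open>m\<close>
  (with \<open>y = x m ^ k\<close>) to \<open>\<Sum>\<^sub>n tmhs x \<tau> (replicate n k) N u\<^sup>n\<close>, and \<open>interp_dlog \<tau> y\<close> is its
  logarithmic derivative.\<close>

definition interp_factor :: "'a::comm_ring_1 \<Rightarrow> 'a \<Rightarrow> 'a fps" where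
  "interp_factor \<tau> y = Abs_fps (\<lambda>j. if j = 0 then 1 else \<tau> ^ (j - 1) * y ^ j)"

definition interp_dlog :: "'a::comm_ring_1 \<Rightarrow> 'a \<Rightarrow> 'a fps" where
  "interp_dlog \<tau> y = Abs_fps (\<lambda>i. (\<tau> ^ Suc i - (\<tau> - 1) ^ Suc i) * y ^ Suc i)"

lemma power_diff_convolution:
  fixes \<tau> :: "'a::comm_ring_1"
  shows "(\<tau> ^ Suc n - (\<tau> - 1) ^ Suc n) + (\<Sum>i<n. \<tau> ^ i * (\<tau> ^ (n - i) - (\<tau> - 1) ^ (n - i)))
     = of_nat (Suc n) * \<tau> ^ n"
proof -
  have geometric: "\<tau> ^ Suc n - (\<tau> - 1) ^ Suc n = (\<Sum>i<Suc n. (\<tau> - 1) ^ (n - i) * \<tau> ^ i)"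
    using power_diff_sumr2[of \<tau> "Suc n" "\<tau> - 1"] by simp
  have "(\<Sum>i<n. \<tau> ^ i * (\<tau> ^ (n - i) - (\<tau> - 1) ^ (n - i)))
      = of_nat n * \<tau> ^ n - (\<Sum>i<n. (\<tau> - 1) ^ (n - i) * \<tau> ^ i)"
    by (simp add: sum_subtractf algebra_simps power_add[symmetric])
  also have "(\<Sum>i<n. (\<tau> - 1) ^ (n - i) * \<tau> ^ i) = (\<tau> ^ Suc n - (\<tau> - 1) ^ Suc n) - \<tau> ^ n"
    unfolding geometric by simp
  finally show ?thesis
    by (simp add: algebra_simps)
qed

lemma fps_deriv_interp_factor: "fps_deriv (interp_factor \<tau> y) = interp_factor \<tau> y * interp_dlog \<tau> y"
proof (rule fps_ext)
  fix n
  let ?f = "interp_factor \<tau> y" and ?h = "interp_dlog \<tau> y" and ?D = "\<lambda>j. \<tau> ^ j - (\<tau> - 1) ^ j"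
  have "fps_nth ?f (Suc i) * fps_nth ?h (n - Suc i) = y ^ Suc n * (\<tau> ^ i * ?D (n - i))" if "i < n" for i
  proof -
    have "Suc i + (n - i) = Suc n"
      using that by simp
    then have y: "y ^ Suc i * y ^ (n - i) = y ^ Suc n"
      by (metis power_add)
    have "Suc (n - Suc i) = n - i"
      using that by simp
    then have "fps_nth ?f (Suc i) * fps_nth ?h (n - Suc i) = \<tau> ^ i * y ^ Suc i * (?D (n - i) * y ^ (n - i))"
      by (simp add: interp_factor_def interp_dlog_def del: power_Suc)
    also have "\<dots> = (y ^ Suc i * y ^ (n - i)) * (\<tau> ^ i * ?D (n - i))"
      by (simp only: mult_ac)
    finally show ?thesis
      by (simp only: y)
  qed
  then have "(\<Sum>i<n. fps_nth ?f (Suc i) * fps_nth ?h (n - Suc i)) = (\<Sum>i<n. y ^ Suc n * (\<tau> ^ i * ?D (n - i)))"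
    by (intro sum.cong) auto
  moreover have "fps_nth (?f * ?h) n = fps_nth ?f 0 * fps_nth ?h n + (\<Sum>i<n. fps_nth ?f (Suc i) * fps_nth ?h (n - Suc i))"
    by (simp add: fps_mult_nth atLeast0AtMost sum.atMost_shift)
  ultimately have "fps_nth (?f * ?h) n = y ^ Suc n * (?D (Suc n) + (\<Sum>i<n. \<tau> ^ i * ?D (n - i)))"
    by (simp add: interp_factor_def interp_dlog_def sum_distrib_left distrib_left mult.commute)
  also have "\<dots> = fps_nth (fps_deriv ?f) n"
    by (simp only: power_diff_convolution) (simp add: interp_factor_def mult_ac)
  finally show "fps_nth (fps_deriv ?f) n = fps_nth (?f * ?h) n" ..
qed

definition tmhs_series :: "(nat \<Rightarrow> 'a::comm_ring_1) \<Rightarrow> 'a \<Rightarrow> nat \<Rightarrow> nat \<Rightarrow> 'a fps" where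
  "tmhs_series x \<tau> k N = Abs_fps (\<lambda>n. tmhs x \<tau> (replicate n k) N)"

definition dlog_series :: "(nat \<Rightarrow> 'a::comm_ring_1) \<Rightarrow> 'a \<Rightarrow> nat \<Rightarrow> nat \<Rightarrow> 'a fps" where
  "dlog_series x \<tau> k N = Abs_fps (\<lambda>i. (\<tau> ^ Suc i - (\<tau> - 1) ^ Suc i) * (\<Sum>m\<in>{1..N}. (x m ^ k) ^ Suc i))"

lemma tmhs_series_0: "tmhs_series x \<tau> k 0 = 1"
  by (rule fps_ext) (simp add: tmhs_series_def tmhs_0)

lemma tmhs_series_Suc: "tmhs_series x \<tau> k (Suc N) = interp_factor \<tau> (x (Suc N) ^ k) * tmhs_series x \<tau> k N"
proof (rule fps_ext)
  fix n
  show "fps_nth (tmhs_series x \<tau> k (Suc N)) n = fps_nth (interp_factor \<tau> (x (Suc N) ^ k) * tmhs_series x \<tau> k N) n"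
  proof (cases n)
    case 0
    then show ?thesis by (simp add: tmhs_series_def interp_factor_def fps_mult_nth)
  next
    case (Suc n')
    have "fps_nth (interp_factor \<tau> (x (Suc N) ^ k) * tmhs_series x \<tau> k N) n
        = (\<Sum>i\<le>Suc n'. fps_nth (interp_factor \<tau> (x (Suc N) ^ k)) i * tmhs x \<tau> (replicate (Suc n' - i) k) N)"
      by (simp add: fps_mult_nth tmhs_series_def Suc atLeast0AtMost)
    also have "\<dots> = tmhs x \<tau> (replicate (Suc n') k) N
        + (\<Sum>j\<le>n'. \<tau> ^ j * (x (Suc N) ^ k) ^ Suc j * tmhs x \<tau> (replicate (n' - j) k) N)"
      by (subst sum.atMost_Suc_shift) (simp add: interp_factor_def)
    also have "\<dots> = tmhs x \<tau> (replicate (Suc n') k) (Suc N)"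
      by (simp only: tmhs_Suc tmhs_top_replicate diff_Suc_1)
    finally show ?thesis
      by (simp add: tmhs_series_def Suc)
  qed
qed

lemma dlog_series_0: "dlog_series x \<tau> k 0 = 0"
  by (rule fps_ext) (simp add: dlog_series_def)

lemma dlog_series_Suc: "dlog_series x \<tau> k (Suc N) = dlog_series x \<tau> k N + interp_dlog \<tau> (x (Suc N) ^ k)"
  by (rule fps_ext) (simp add: dlog_series_def interp_dlog_def algebra_simps)

lemma fps_deriv_tmhs_series: "fps_deriv (tmhs_series x \<tau> k N) = tmhs_series x \<tau> k N * dlog_series x \<tau> k N"
  by (induction N)
    (simp_all add: tmhs_series_0 dlog_series_0 tmhs_series_Suc dlog_series_Suc fps_deriv_interp_factor
      algebra_simps)

section \<open>Both sides of the identity satisfy the same differential equation\<close>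

lemma fps_ode_unique:
  fixes F G H :: "'a::comm_ring_1 fps"
  assumes cancel: "\<And>n a. of_nat (Suc n) * a = (0::'a) \<Longrightarrow> a = 0"
    and F: "fps_deriv F = F * H" and G: "fps_deriv G = G * H" and init: "fps_nth F 0 = fps_nth G 0"
  shows "F = G"
proof -
  have "\<forall>i\<le>n. fps_nth F i = fps_nth G i" for n
  proof (induction n)
    case 0
    then show ?case using init by simp
  next
    case (Suc n)
    have "of_nat (Suc n) * fps_nth F (Suc n) = fps_nth (F * H) n"
      using arg_cong[OF F, of "\<lambda>P. fps_nth P n"] by simp
    also have "\<dots> = fps_nth (G * H) n"
      unfolding fps_mult_nth using Suc by (intro sum.cong) auto
    also have "\<dots> = of_nat (Suc n) * fps_nth G (Suc n)"
      using arg_cong[OF G, of "\<lambda>P. fps_nth P n"] by simp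
    finally have "fps_nth F (Suc n) = fps_nth G (Suc n)"
      using cancel[of n "fps_nth F (Suc n) - fps_nth G (Suc n)"] by (simp add: algebra_simps)
    with Suc show ?case
      using le_Suc_eq by auto
  qed
  then show ?thesis
    by (intro fps_ext) auto
qed

context rat_poly_hom
begin

definition exp_coeff :: "nat \<Rightarrow> 'a" where
  "exp_coeff m = \<iota> [:inverse (fact m):]"

lemma exp_coeff_Suc: "exp_coeff (Suc m) * of_nat (Suc m) = exp_coeff m"
proof -
  have "[:inverse (fact (Suc m)):] * of_nat (Suc m) = ([:inverse (fact m):] :: rat poly)"
    by (simp add: of_nat_poly del: of_nat_Suc)
  then show ?thesis
    unfolding exp_coeff_def by (simp only: hom_mult[symmetric] hom_of_nat[symmetric])
qed

definition exp_partial :: "'a fps \<Rightarrow> nat \<Rightarrow> 'a fps" where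
  "exp_partial l M = (\<Sum>m\<le>M. fps_const (exp_coeff m) * l ^ m)"

definition exp_series :: "'a fps \<Rightarrow> 'a fps" where
  "exp_series l = Abs_fps (\<lambda>n. \<Sum>m\<le>n. exp_coeff m * fps_nth (l ^ m) n)"

lemma fps_deriv_exp_partial: "fps_deriv (exp_partial l (Suc M)) = exp_partial l M * fps_deriv l"
proof -
  have "fps_deriv (exp_partial l (Suc M))
      = (\<Sum>m\<le>Suc M. fps_const (exp_coeff m) * (of_nat m * fps_deriv l * l ^ (m - 1)))"
    unfolding exp_partial_def fps_deriv_sum by (simp only: fps_deriv_mult_const_left fps_deriv_power')
  also have "\<dots> = (\<Sum>m\<le>M. (fps_const (exp_coeff (Suc m)) * of_nat (Suc m)) * l ^ m * fps_deriv l)"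
    by (subst sum.atMost_Suc_shift) (simp add: mult_ac)
  also have "\<dots> = exp_partial l M * fps_deriv l"
    by (simp add: exp_partial_def sum_distrib_right fps_of_nat[symmetric] exp_coeff_Suc del: of_nat_Suc)
  finally show ?thesis .
qed

lemma exp_partial_nth:
  assumes "fps_nth l 0 = 0" "j \<le> M"
  shows "fps_nth (exp_partial l M) j = fps_nth (exp_series l) j"
proof -
  have "fps_nth (exp_partial l M) j = (\<Sum>m\<le>M. exp_coeff m * fps_nth (l ^ m) j)"
    by (simp add: exp_partial_def fps_sum_nth)
  also have "\<dots> = (\<Sum>m\<le>j. exp_coeff m * fps_nth (l ^ m) j)"
    using assms startsby_zero_power_prefix[OF assms(1)] by (intro sum.mono_neutral_right) auto
  finally show ?thesis
    by (simp add: exp_series_def)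
qed

lemma fps_deriv_exp_series:
  assumes "fps_nth l 0 = 0"
  shows "fps_deriv (exp_series l) = exp_series l * fps_deriv l"
proof (rule fps_ext)
  fix n
  have "fps_nth (fps_deriv (exp_series l)) n = fps_nth (fps_deriv (exp_partial l (Suc n))) n"
    using exp_partial_nth[OF assms, of "Suc n" "Suc n"] by simp
  also have "\<dots> = fps_nth (exp_partial l n * fps_deriv l) n"
    by (simp only: fps_deriv_exp_partial)
  also have "\<dots> = fps_nth (exp_series l * fps_deriv l) n"
    unfolding fps_mult_nth using exp_partial_nth[OF assms] by (intro sum.cong) auto
  finally show "fps_nth (fps_deriv (exp_series l)) n = fps_nth (exp_series l * fps_deriv l) n" .
qed

lemma tmhs_eval_geomser: "0 < k \<Longrightarrow> tmhs_eval x N (geomser k n) = tmhs x tvar (replicate n k) N"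
  by (simp add: geomser_def tmhs_eval_wmon)

lemma tmhs_eval_logser:
  assumes "0 < k"
  shows "tmhs_eval x N (logser k n) =
    (if n = 0 then 0 else \<iota> (smult (1 / of_nat n) (dpoly n)) * tmhs x tvar [n * k] N)"
proof (cases "n = 0")
  case False
  then have "tmhs_eval x N (logser k n) = tmhs_eval x N (\<lambda>v. smult (1 / of_nat n) (dpoly n) * wmon (zw [n * k]) v)"
    by (simp only: logser_def if_False)
  also have "\<dots> = \<iota> (smult (1 / of_nat n) (dpoly n)) * tmhs x tvar [n * k] N"
    unfolding tmhs_eval_cmult[OF finite_supp_wmon] using assms False by (simp add: tmhs_eval_wmon)
  finally show ?thesis
    using False by simp
qed (simp add: logser_def tmhs_eval_def)

lemma tmhs_eval_texp_logser:
  assumes "0 < k"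
  shows "tmhs_eval x N (texp (logser k) n) = tmhs_eval x N (geomser k n)"
proof -
  define l where "l = Abs_fps (\<lambda>i. tmhs_eval x N (logser k i))"
  have l0: "fps_nth l 0 = 0"
    by (simp add: l_def tmhs_eval_logser[OF assms])
  have dl: "fps_deriv l = dlog_series x tvar k N"
  proof (rule fps_ext)
    fix i
    have "fps_nth (fps_deriv l) i
        = of_nat (Suc i) * \<iota> (smult (1 / of_nat (Suc i)) (dpoly (Suc i))) * tmhs x tvar [Suc i * k] N"
      by (simp add: l_def tmhs_eval_logser[OF assms] mult.assoc del: of_nat_Suc)
    then show "fps_nth (fps_deriv l) i = fps_nth (dlog_series x tvar k N) i"
      by (simp add: of_nat_Suc_mult_hom_smult hom_dpoly tmhs_singleton dlog_series_def
          power_mult[symmetric] power_add mult.commute del: of_nat_Suc)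
  qed
  have "exp_series l = tmhs_series x tvar k N"
  proof (rule fps_ode_unique[OF of_nat_Suc_mult_cancel])
    show "fps_deriv (exp_series l) = exp_series l * dlog_series x tvar k N"
      using fps_deriv_exp_series[OF l0] dl by simp
    show "fps_deriv (tmhs_series x tvar k N) = tmhs_series x tvar k N * dlog_series x tvar k N"
      by (rule fps_deriv_tmhs_series)
    show "fps_nth (exp_series l) 0 = fps_nth (tmhs_series x tvar k N) 0"
      by (simp add: exp_series_def exp_coeff_def tmhs_series_def hom_one flip: one_pCons)
  qed
  then show ?thesis
    by (simp add: tmhs_eval_texp finite_supp_logser exp_series_def exp_coeff_def l_def
        tmhs_eval_geomser[OF assms] tmhs_series_def fps_eq_iff)
qed

end

section \<open>Injectivity of the evaluation at formal variables\<close>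

text \<open>\<open>qt_poly\<close> is the polynomial ring \<open>\<rat>[t][x\<^sub>1, x\<^sub>2, \<dots>]\<close>, a monomial being the finitely
  supported exponent vector of the \<open>x\<^sub>m\<close>.\<close>

type_synonym monomial = "nat \<Rightarrow>\<^sub>0 nat"
type_synonym qt_poly = "monomial \<Rightarrow>\<^sub>0 rat poly"

interpretation formal: rat_poly_hom "Poly_Mapping.single 0 :: rat poly \<Rightarrow> qt_poly"
  by unfold_locales (simp_all add: single_add mult_single)

definition xvar :: "nat \<Rightarrow> qt_poly" where
  "xvar m = Poly_Mapping.single (Poly_Mapping.single m 1) 1"

lemma xvar_power: "xvar m ^ c = Poly_Mapping.single (Poly_Mapping.single m c) 1"
  by (induction c) (simp_all add: xvar_def mult_single single_add[symmetric])

lemma keys_monomial_add: "Poly_Mapping.keys ((a :: monomial) + b) = Poly_Mapping.keys a \<union> Poly_Mapping.keys b"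
  by (auto simp: in_keys_iff lookup_add)

lemma lookup_single_mult_add:
  "Poly_Mapping.lookup (Poly_Mapping.single k v * p) (k + q) = v * Poly_Mapping.lookup (p :: qt_poly) q"
proof -
  have "Poly_Mapping.lookup (Poly_Mapping.single k v * p) (k + q)
      = (\<Sum>l. (v * (\<Sum>q'. Poly_Mapping.lookup p q' when k + q = l + q') when k = l))"
    by (simp add: lookup_mult lookup_single when_mult)
  then show ?thesis
    by simp
qed

lemma lookup_const_mult: "Poly_Mapping.lookup (Poly_Mapping.single 0 v * p) q = v * Poly_Mapping.lookup (p :: qt_poly) q"
  using lookup_single_mult_add[of 0 v p q] by simp

lemma lookup_single_mult_eq_0:
  assumes "\<And>q. l \<noteq> k + q"
  shows "Poly_Mapping.lookup (Poly_Mapping.single k v * (p :: qt_poly)) l = 0"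
proof -
  have "l \<notin> Poly_Mapping.keys (Poly_Mapping.single k v * p)"
    using keys_mult[of "Poly_Mapping.single k v" p] assms by (auto split: if_splits)
  then show ?thesis
    by (simp add: in_keys_iff)
qed

lemma keys_const_mult_subset: "Poly_Mapping.keys (Poly_Mapping.single 0 c * (p :: qt_poly)) \<subseteq> Poly_Mapping.keys p"
  using keys_mult[of "Poly_Mapping.single 0 c" p] by (auto split: if_splits)

lemma keys_tmhs_subset:
  "ks \<noteq> [] \<Longrightarrow> Poly_Mapping.keys (tmhs x \<tau> ks N :: qt_poly) \<subseteq> (\<Union>m\<in>{1..N}. Poly_Mapping.keys (tmhs_top x \<tau> ks m))"
  by (simp add: tmhs_def keys_sum)

lemma keys_tmhs_top_xvar_Cons:
  assumes "\<kappa> \<in> Poly_Mapping.keys (tmhs_top xvar (Poly_Mapping.single 0 \<tau>) (k # ks) m)"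
  obtains b where "\<kappa> = Poly_Mapping.single m k + b"
    "b \<in> Poly_Mapping.keys (tmhs xvar (Poly_Mapping.single 0 \<tau>) ks (m - 1))
      \<or> b \<in> Poly_Mapping.keys (tmhs_top xvar (Poly_Mapping.single 0 \<tau>) ks m)"
proof -
  let ?t = "Poly_Mapping.single 0 \<tau> :: qt_poly"
  let ?X = "Poly_Mapping.single (Poly_Mapping.single m k) (1 :: rat poly)"
  let ?P = "tmhs xvar ?t ks (m - 1) + ?t * tmhs_top xvar ?t ks m"
  have "\<kappa> \<in> Poly_Mapping.keys (?X * ?P)"
    using assms by (simp add: tmhs_top_Cons xvar_power)
  with keys_mult have "\<kappa> \<in> {a + b |a b. a \<in> Poly_Mapping.keys ?X \<and> b \<in> Poly_Mapping.keys ?P}"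
    by (rule subsetD)
  then obtain b where \<kappa>: "\<kappa> = Poly_Mapping.single m k + b" and b: "b \<in> Poly_Mapping.keys ?P"
    by auto
  from keys_add b have "b \<in> Poly_Mapping.keys (tmhs xvar ?t ks (m - 1)) \<union> Poly_Mapping.keys (?t * tmhs_top xvar ?t ks m)"
    by (rule subsetD)
  with \<kappa> keys_const_mult_subset[of \<tau> "tmhs_top xvar ?t ks m"] show ?thesis
    using that by auto
qed

lemma keys_tmhs_xvar_and_top:
  "0 \<notin> set ks \<Longrightarrow>
    (\<forall>N. \<forall>\<kappa>\<in>Poly_Mapping.keys (tmhs xvar (Poly_Mapping.single 0 \<tau>) ks N).
        Poly_Mapping.keys \<kappa> \<subseteq> {1..N} \<and> card (Poly_Mapping.keys \<kappa>) \<le> length ks)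
  \<and> (\<forall>m>0. \<forall>\<kappa>\<in>Poly_Mapping.keys (tmhs_top xvar (Poly_Mapping.single 0 \<tau>) ks m).
        Poly_Mapping.keys \<kappa> \<subseteq> {1..m} \<and> m \<in> Poly_Mapping.keys \<kappa> \<and> card (Poly_Mapping.keys \<kappa>) \<le> length ks)"
proof (induction ks)
  case Nil
  then show ?case by simp
next
  case (Cons k ks)
  let ?t = "Poly_Mapping.single 0 \<tau> :: qt_poly"
  have top: "Poly_Mapping.keys \<kappa> \<subseteq> {1..m} \<and> m \<in> Poly_Mapping.keys \<kappa> \<and> card (Poly_Mapping.keys \<kappa>) \<le> Suc (length ks)"
    if m: "0 < m" and \<kappa>: "\<kappa> \<in> Poly_Mapping.keys (tmhs_top xvar ?t (k # ks) m)" for m \<kappa>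
  proof -
    obtain b where \<kappa>b: "\<kappa> = Poly_Mapping.single m k + b"
      and b: "b \<in> Poly_Mapping.keys (tmhs xvar ?t ks (m - 1)) \<or> b \<in> Poly_Mapping.keys (tmhs_top xvar ?t ks m)"
      using keys_tmhs_top_xvar_Cons[OF \<kappa>] .
    from b have "Poly_Mapping.keys b \<subseteq> {1..m} \<and> card (Poly_Mapping.keys b) \<le> length ks"
    proof
      assume "b \<in> Poly_Mapping.keys (tmhs xvar ?t ks (m - 1))"
      then have "Poly_Mapping.keys b \<subseteq> {1..m - 1}" "card (Poly_Mapping.keys b) \<le> length ks"
        using Cons.IH Cons.prems by auto
      moreover have "{1..m - 1} \<subseteq> {1..m}"
        by auto
      ultimately show ?thesis
        by (meson subset_trans)
    next
      assume "b \<in> Poly_Mapping.keys (tmhs_top xvar ?t ks m)"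
      then show ?thesis
        using Cons.IH Cons.prems m by auto
    qed
    moreover have "Poly_Mapping.keys \<kappa> = insert m (Poly_Mapping.keys b)"
      using Cons.prems by (simp add: \<kappa>b keys_monomial_add)
    ultimately show ?thesis
      using m by (simp add: card_insert_if)
  qed
  have "Poly_Mapping.keys \<kappa> \<subseteq> {1..N} \<and> card (Poly_Mapping.keys \<kappa>) \<le> Suc (length ks)"
    if \<kappa>: "\<kappa> \<in> Poly_Mapping.keys (tmhs xvar ?t (k # ks) N)" for N \<kappa>
  proof -
    have "\<kappa> \<in> (\<Union>m\<in>{1..N}. Poly_Mapping.keys (tmhs_top xvar ?t (k # ks) m))"
      using keys_tmhs_subset[of "k # ks" xvar ?t N] \<kappa> by blast
    then obtain m where m: "m \<in> {1..N}" and \<kappa>: "\<kappa> \<in> Poly_Mapping.keys (tmhs_top xvar ?t (k # ks) m)"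
      by blast
    have "0 < m" and mN: "{1..m} \<subseteq> {1..N}"
      using m by simp_all
    with top[OF this(1) \<kappa>] show ?thesis
      using subset_trans[OF _ mN] by simp
  qed
  with top show ?case
    by simp
qed

lemma lookup_tmhs_xvar_eq_0:
  assumes "0 \<notin> set ks" "\<not> Poly_Mapping.keys \<kappa> \<subseteq> {1..N}"
  shows "Poly_Mapping.lookup (tmhs xvar (Poly_Mapping.single 0 \<tau>) ks N) \<kappa> = 0"
proof (rule ccontr)
  assume "Poly_Mapping.lookup (tmhs xvar (Poly_Mapping.single 0 \<tau>) ks N) \<kappa> \<noteq> 0"
  then have "\<kappa> \<in> Poly_Mapping.keys (tmhs xvar (Poly_Mapping.single 0 \<tau>) ks N)"
    by (simp add: in_keys_iff)
  with keys_tmhs_xvar_and_top[OF assms(1)] assms(2) show False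
    by blast
qed

lemma lookup_tmhs_top_xvar_eq_0:
  assumes "0 \<notin> set ks" "0 < m" "m \<notin> Poly_Mapping.keys \<kappa> \<or> length ks < card (Poly_Mapping.keys \<kappa>)"
  shows "Poly_Mapping.lookup (tmhs_top xvar (Poly_Mapping.single 0 \<tau>) ks m) \<kappa> = 0"
proof (rule ccontr)
  assume "Poly_Mapping.lookup (tmhs_top xvar (Poly_Mapping.single 0 \<tau>) ks m) \<kappa> \<noteq> 0"
  then have "\<kappa> \<in> Poly_Mapping.keys (tmhs_top xvar (Poly_Mapping.single 0 \<tau>) ks m)"
    by (simp add: in_keys_iff)
  with keys_tmhs_xvar_and_top[OF assms(1)] assms(2)
  have "m \<in> Poly_Mapping.keys \<kappa>" "card (Poly_Mapping.keys \<kappa>) \<le> length ks"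
    by blast+
  with assms(3) show False
    by auto
qed

lemma lookup_single_mult_single_add_eq_0:
  assumes "a < b" "m \<notin> Poly_Mapping.keys q"
  shows "Poly_Mapping.lookup (Poly_Mapping.single (Poly_Mapping.single m b) v * (p :: qt_poly)) (Poly_Mapping.single m a + q) = 0"
proof (rule lookup_single_mult_eq_0)
  fix q'
  show "Poly_Mapping.single m a + q \<noteq> Poly_Mapping.single m b + q'"
  proof
    assume "Poly_Mapping.single m a + q = Poly_Mapping.single m b + q'"
    then have "Poly_Mapping.lookup (Poly_Mapping.single m a + q) m = Poly_Mapping.lookup (Poly_Mapping.single m b + q') m"
      by simp
    then have "a = b + Poly_Mapping.lookup q' m"
      using assms(2) by (simp add: lookup_add not_in_keys_iff_lookup_eq_zero)
    with assms(1) show False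
      by simp
  qed
qed

text \<open>\<open>chain_monomial [c\<^sub>1, \<dots>, c\<^sub>n] = x\<^sub>n ^ c\<^sub>1 \<cdots> x\<^sub>1 ^ c\<^sub>n\<close> involves all of \<open>x\<^sub>1, \<dots>, x\<^sub>n\<close>;
  by the bounds above it occurs in \<open>tmhs xvar \<tau> ks n\<close> only for \<open>ks = [c\<^sub>1, \<dots>, c\<^sub>n]\<close>.\<close>

fun chain_monomial :: "nat list \<Rightarrow> monomial" where
  "chain_monomial [] = 0"
| "chain_monomial (a # r) = Poly_Mapping.single (Suc (length r)) a + chain_monomial r"

lemma keys_chain_monomial: "0 \<notin> set c \<Longrightarrow> Poly_Mapping.keys (chain_monomial c) = {1..length c}"
  by (induction c) (auto simp: keys_monomial_add)

lemma lookup_tmhs_top_chain_monomial: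
  assumes a: "0 < a" and r: "0 \<notin> set r" and ks: "0 \<notin> set ks" "length ks \<le> Suc (length r)"
    and IH: "\<And>s. 0 \<notin> set s \<Longrightarrow> length s \<le> length r \<Longrightarrow>
      Poly_Mapping.lookup (tmhs xvar (Poly_Mapping.single 0 \<tau>) s (length r)) (chain_monomial r)
      = (if s = r then 1 else 0)"
  shows "Poly_Mapping.lookup (tmhs_top xvar (Poly_Mapping.single 0 \<tau>) ks (Suc (length r))) (chain_monomial (a # r))
    = (if ks = a # r then 1 else 0)"
proof (cases ks)
  case (Cons b s)
  let ?m = "Suc (length r)" and ?t = "Poly_Mapping.single 0 \<tau> :: qt_poly"
  let ?kb = "Poly_Mapping.single ?m b" and ?c = "chain_monomial (a # r)"
  let ?Q = "tmhs xvar ?t s (length r)" and ?E = "tmhs_top xvar ?t s ?m"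
  have s: "0 \<notin> set s" "length s \<le> length r"
    using ks Cons by auto
  have "tmhs_top xvar ?t ks ?m = Poly_Mapping.single ?kb 1 * ?Q + (Poly_Mapping.single ?kb 1 * ?t) * ?E"
    unfolding Cons tmhs_top_Cons xvar_power by (simp only: diff_Suc_1 distrib_left mult.assoc)
  also have "Poly_Mapping.single ?kb 1 * ?t = Poly_Mapping.single ?kb \<tau>"
    by (simp add: mult_single)
  finally have split: "Poly_Mapping.lookup (tmhs_top xvar ?t ks ?m) ?c
      = Poly_Mapping.lookup (Poly_Mapping.single ?kb 1 * ?Q) ?c + Poly_Mapping.lookup (Poly_Mapping.single ?kb \<tau> * ?E) ?c"
    by (simp only: lookup_add)
  have keys_r: "Poly_Mapping.keys (chain_monomial r) = {1..length r}"
    using keys_chain_monomial[OF r] .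
  consider "a = b" | "b < a" | "a < b"
    by linarith
  then show ?thesis
  proof cases
    case 1
    then have c: "?c = ?kb + chain_monomial r"
      by simp
    have "Poly_Mapping.lookup ?E (chain_monomial r) = 0"
      by (rule lookup_tmhs_top_xvar_eq_0) (use s keys_r in auto)
    then show ?thesis
      unfolding split unfolding c lookup_single_mult_add using IH[OF s] 1 Cons by simp
  next
    case 2
    define q where "q = Poly_Mapping.single ?m (a - b) + chain_monomial r"
    have c: "?c = ?kb + q"
      using 2 by (simp add: q_def add.assoc[symmetric] single_add[symmetric])
    have keys_q: "Poly_Mapping.keys q = {1..?m}"
      using 2 keys_r by (auto simp: q_def keys_monomial_add)
    have "Poly_Mapping.lookup ?Q q = 0"
      by (rule lookup_tmhs_xvar_eq_0) (use s keys_q in auto)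
    moreover have "Poly_Mapping.lookup ?E q = 0"
      by (rule lookup_tmhs_top_xvar_eq_0) (use s keys_q in auto)
    ultimately show ?thesis
      unfolding split unfolding c lookup_single_mult_add using 2 Cons by simp
  next
    case 3
    have "?c = Poly_Mapping.single ?m a + chain_monomial r" "?m \<notin> Poly_Mapping.keys (chain_monomial r)"
      using keys_r by simp_all
    then show ?thesis
      unfolding split using 3 Cons by (simp add: lookup_single_mult_single_add_eq_0)
  qed
qed simp

lemma lookup_tmhs_chain_monomial:
  "0 \<notin> set c \<Longrightarrow> 0 \<notin> set ks \<Longrightarrow> length ks \<le> length c \<Longrightarrow>
    Poly_Mapping.lookup (tmhs xvar (Poly_Mapping.single 0 \<tau>) ks (length c)) (chain_monomial c) = (if ks = c then 1 else 0)"
proof (induction c arbitrary: ks)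
  case Nil
  then show ?case by (simp add: lookup_one)
next
  case (Cons a r)
  let ?t = "Poly_Mapping.single 0 \<tau> :: qt_poly"
  have "Poly_Mapping.lookup (tmhs xvar ?t ks (length r)) (chain_monomial (a # r)) = 0"
    by (rule lookup_tmhs_xvar_eq_0) (use Cons.prems keys_chain_monomial[OF Cons.prems(1)] in auto)
  moreover have "Poly_Mapping.lookup (tmhs_top xvar ?t ks (Suc (length r))) (chain_monomial (a # r))
      = (if ks = a # r then 1 else 0)"
    by (rule lookup_tmhs_top_chain_monomial) (use Cons in auto)
  ultimately show ?case
    unfolding length_Cons tmhs_Suc lookup_add by simp
qed

lemma lookup_formal_tmhs_eval:
  "Poly_Mapping.lookup (formal.tmhs_eval xvar N D) \<kappa>
    = (\<Sum>w\<in>supp D. D w * Poly_Mapping.lookup (tmhs xvar formal.tvar (dec w) N) \<kappa>)"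
  by (simp add: formal.tmhs_eval_def hel_eval_def lookup_sum lookup_const_mult)

lemma hel_eq_0_if_formal_tmhs_eval_eq_0:
  assumes fin: "finite (supp D)" and h1: "supp D \<subseteq> {w. h1_word w}"
    and zero: "\<And>N. formal.tmhs_eval xvar N D = 0"
  shows "D = (\<lambda>v. 0)"
proof (rule ccontr)
  assume "D \<noteq> (\<lambda>v. 0)"
  then have ne: "supp D \<noteq> {}"
    by (auto simp: supp_def)
  define L where "L = Max ((\<lambda>w. length (dec w)) ` supp D)"
  have "L \<in> (\<lambda>w. length (dec w)) ` supp D"
    unfolding L_def using fin ne by (intro Max_in) auto
  then obtain w0 where w0: "w0 \<in> supp D" "length (dec w0) = L"
    by auto
  have le: "length (dec w) \<le> L" if "w \<in> supp D" for w
    using fin that unfolding L_def by (intro Max_ge) auto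
  have dec_inj: "dec w = dec w0 \<longleftrightarrow> w = w0" if "w \<in> supp D" for w
  proof -
    have "zw (dec w) = w" "zw (dec w0) = w0"
      using h1 that w0(1) by (auto simp: h1_word_def)
    then show ?thesis
      by metis
  qed
  have coeff: "Poly_Mapping.lookup (tmhs xvar formal.tvar (dec w) L) (chain_monomial (dec w0))
      = (if w = w0 then 1 else 0)" if "w \<in> supp D" for w
  proof -
    have "Poly_Mapping.lookup (tmhs xvar formal.tvar (dec w) L) (chain_monomial (dec w0))
        = (if dec w = dec w0 then 1 else 0)"
      unfolding formal.tvar_def w0(2)[symmetric]
      by (rule lookup_tmhs_chain_monomial) (use zero_notin_dec le[OF that] w0(2) in auto)
    then show ?thesis
      using dec_inj[OF that] by simp
  qed
  have "0 = Poly_Mapping.lookup (formal.tmhs_eval xvar L D) (chain_monomial (dec w0))"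
    using zero by simp
  also have "\<dots> = (\<Sum>w\<in>supp D. D w * Poly_Mapping.lookup (tmhs xvar formal.tvar (dec w) L) (chain_monomial (dec w0)))"
    by (rule lookup_formal_tmhs_eval)
  also have "\<dots> = (\<Sum>w\<in>supp D. if w = w0 then D w else 0)"
    by (rule sum.cong) (simp_all add: coeff)
  also have "\<dots> = D w0"
    using fin w0(1) by simp
  finally show False
    using w0(1) by (simp add: supp_def)
qed

theorem geomser_eq_texp_logser:
  assumes "0 < k"
  shows "geomser k = texp (logser k)"
proof
  fix n
  let ?G = "geomser k n" and ?T = "texp (logser k) n"
  have fin: "finite (supp ?G)" "finite (supp ?T)"
    by (simp_all add: finite_supp_geomser finite_supp_texp finite_supp_logser)
  have "(\<lambda>v. ?G v - ?T v) = (\<lambda>v. 0)"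
  proof (rule hel_eq_0_if_formal_tmhs_eval_eq_0)
    show "finite (supp (\<lambda>v. ?G v - ?T v))"
      using fin by (rule finite_supp_diff)
    show "supp (\<lambda>v. ?G v - ?T v) \<subseteq> {w. h1_word w}"
      using supp_diff_subset supp_geomser_h1[OF assms] supp_texp_h1 by blast
    show "formal.tmhs_eval xvar N (\<lambda>v. ?G v - ?T v) = 0" for N
      using fin by (simp add: formal.tmhs_eval_diff formal.tmhs_eval_texp_logser[OF assms])
  qed
  then show "?G = ?T"
    by (simp add: fun_eq_iff)
qed

section \<open>Passage to multiple zeta values\<close>

text \<open>At \<open>\<tau> = 0\<close> only strictly decreasing indices survive, so \<open>tmhs x 0\<close> is the ordinary truncated
  multiple harmonic sum, and \<open>tmhs_merges\<close> below is the truncated form of the definition of \<open>zeta_t\<close>.\<close>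

lemma merges_length: "p \<in> set (merges ks) \<Longrightarrow> length p \<le> length ks \<and> (ks \<noteq> [] \<longrightarrow> p \<noteq> [])"
proof (induction ks arbitrary: p rule: merges.induct)
  case (3 a b r)
  then obtain p' where p': "p' \<in> set (merges (b # r))" "p = a # p' \<or> p = (a + hd p') # tl p'"
    by auto
  with "3.IH"[OF p'(1)] show ?case
    by (cases p') auto
qed auto

lemma merges_lower_bound:
  "(\<forall>a\<in>set ks. c \<le> a) \<Longrightarrow> p \<in> set (merges ks) \<Longrightarrow> (\<forall>a\<in>set p. c \<le> a)"
proof (induction ks arbitrary: p rule: merges.induct)
  case (3 a b r)
  from "3.prems"(2) obtain p' where p': "p' \<in> set (merges (b # r))" "p = a # p' \<or> p = (a + hd p') # tl p'"
    by auto
  have "p' \<noteq> []" and bound: "\<forall>a\<in>set p'. c \<le> a"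
    using merges_length[OF p'(1)] "3.IH"[OF _ p'(1)] "3.prems"(1) by auto
  then show ?case
    using p'(2) "3.prems"(1) by (cases p') auto
qed auto

lemma sum_sum_list_swap:
  "(\<Sum>j\<in>J. \<Sum>p\<leftarrow>xs. g p j) = (\<Sum>p\<leftarrow>xs. \<Sum>j\<in>J. g p j)"
  by (induction xs) (simp_all add: sum.distrib)

lemma tmhs_merges_of_tmhs_top_merges:
  assumes "ks \<noteq> []"
    and "\<And>j. tmhs_top x \<tau> ks j = (\<Sum>p\<leftarrow>merges ks. \<tau> ^ (length ks - length p) * tmhs_top x 0 p j)"
  shows "tmhs x \<tau> ks N = (\<Sum>p\<leftarrow>merges ks. \<tau> ^ (length ks - length p) * tmhs x 0 p N)"
proof -
  have "tmhs x \<tau> ks N = (\<Sum>p\<leftarrow>merges ks. \<Sum>j\<in>{1..N}. \<tau> ^ (length ks - length p) * tmhs_top x 0 p j)"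
    using assms by (simp add: tmhs_def sum_sum_list_swap)
  also have "\<dots> = (\<Sum>p\<leftarrow>merges ks. \<tau> ^ (length ks - length p) * tmhs x 0 p N)"
    using assms(1) merges_length by (intro arg_cong[where f = sum_list] map_cong) (auto simp: tmhs_def sum_distrib_left)
  finally show ?thesis .
qed

lemma tmhs_top_merges:
  "tmhs_top x \<tau> ks m = (\<Sum>p\<leftarrow>merges ks. \<tau> ^ (length ks - length p) * tmhs_top x 0 p m)"
proof (induction ks arbitrary: m rule: merges.induct)
  case (2 a)
  then show ?case by (simp add: tmhs_top_Cons)
next
  case (3 a b r)
  let ?M = "merges (b # r)" and ?L = "length (b # r)"
  have tail: "tmhs x \<tau> (b # r) (m - 1) = (\<Sum>p\<leftarrow>?M. \<tau> ^ (?L - length p) * tmhs x 0 p (m - 1))"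
    by (rule tmhs_merges_of_tmhs_top_merges) (use 3 in auto)
  have unmerged: "(\<Sum>p\<leftarrow>map ((#) a) ?M. \<tau> ^ (length (a # b # r) - length p) * tmhs_top x 0 p m)
      = x m ^ a * (\<Sum>p\<leftarrow>?M. \<tau> ^ (?L - length p) * tmhs x 0 p (m - 1))"
    by (simp add: o_def tmhs_top_Cons sum_list_const_mult[symmetric] algebra_simps)
  have "\<tau> ^ (length (a # b # r) - length ((a + hd p) # tl p)) * tmhs_top x 0 ((a + hd p) # tl p) m
      = x m ^ a * (\<tau> * (\<tau> ^ (?L - length p) * tmhs_top x 0 p m))" if p: "p \<in> set ?M" for p
  proof -
    obtain h q where "p = h # q"
      using merges_length[OF p] by (cases p) auto
    with merges_length[OF p] show ?thesis
      by (simp add: tmhs_top_Cons power_add Suc_diff_le algebra_simps)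
  qed
  then have merged: "(\<Sum>p\<leftarrow>map (\<lambda>p. (a + hd p) # tl p) ?M. \<tau> ^ (length (a # b # r) - length p) * tmhs_top x 0 p m)
      = x m ^ a * (\<tau> * (\<Sum>p\<leftarrow>?M. \<tau> ^ (?L - length p) * tmhs_top x 0 p m))"
    by (simp add: o_def sum_list_const_mult[symmetric] cong: map_cong)
  have "tmhs_top x \<tau> (a # b # r) m = x m ^ a * (tmhs x \<tau> (b # r) (m - 1) + \<tau> * tmhs_top x \<tau> (b # r) m)"
    by (rule tmhs_top_Cons)
  also have "\<dots> = (\<Sum>p\<leftarrow>merges (a # b # r). \<tau> ^ (length (a # b # r) - length p) * tmhs_top x 0 p m)"
    unfolding tail "3.IH" merges.simps map_append sum_list_append unmerged merged
    by (simp only: distrib_left)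
  finally show ?case .
qed simp

lemma tmhs_merges:
  "tmhs x \<tau> ks N = (\<Sum>p\<leftarrow>merges ks. \<tau> ^ (length ks - length p) * tmhs x 0 p N)"
proof (cases "ks = []")
  case False
  then show ?thesis
    by (rule tmhs_merges_of_tmhs_top_merges) (rule tmhs_top_merges)
qed simp

definition strict_chains :: "nat \<Rightarrow> nat list set" where
  "strict_chains n = {ms. length ms = n \<and> sorted_wrt (>) ms \<and> (\<forall>m\<in>set ms. 0 < m)}"

definition strict_chains_le :: "nat \<Rightarrow> nat \<Rightarrow> nat list set" where
  "strict_chains_le N n = {ms \<in> strict_chains n. \<forall>m\<in>set ms. m \<le> N}"

lemma finite_strict_chains_le: "finite (strict_chains_le N n)"
proof (rule finite_subset)
  show "strict_chains_le N n \<subseteq> {ms. set ms \<subseteq> {0..N} \<and> length ms = n}"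
    by (auto simp: strict_chains_le_def strict_chains_def)
qed (rule finite_lists_length_eq, simp)

lemma strict_chains_le_Suc:
  "bij_betw (\<lambda>(j, ms). j # ms) (SIGMA j:{1..N}. strict_chains_le (j - 1) n) (strict_chains_le N (Suc n))"
proof (rule bij_betwI')
  show "(case z of (j, ms) \<Rightarrow> j # ms) \<in> strict_chains_le N (Suc n)"
    if "z \<in> (SIGMA j:{1..N}. strict_chains_le (j - 1) n)" for z
    using that by (fastforce simp: strict_chains_le_def strict_chains_def)
  show "\<exists>z\<in>SIGMA j:{1..N}. strict_chains_le (j - 1) n. ms = (case z of (j, ms) \<Rightarrow> j # ms)"
    if "ms \<in> strict_chains_le N (Suc n)" for ms
    using that by (cases ms) (fastforce simp: strict_chains_le_def strict_chains_def)+
qed auto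

lemma mhs_eq_sum_strict_chains:
  "tmhs x 0 ks N = (\<Sum>ms\<in>strict_chains_le N (length ks). \<Prod>j<length ks. x (ms ! j) ^ (ks ! j))"
proof (induction ks arbitrary: N)
  case Nil
  have "strict_chains_le N 0 = {[]}"
    by (auto simp: strict_chains_le_def strict_chains_def)
  then show ?case by simp
next
  case (Cons a ks)
  let ?f = "\<lambda>ms. \<Prod>i<length (a # ks). x (ms ! i) ^ ((a # ks) ! i)"
  have "tmhs x 0 (a # ks) N = (\<Sum>j\<in>{1..N}. x j ^ a * tmhs x 0 ks (j - 1))"
    by (simp add: tmhs_def tmhs_top_Cons)
  also have "\<dots> = (\<Sum>(j, ms)\<in>(SIGMA j:{1..N}. strict_chains_le (j - 1) (length ks)). ?f (j # ms))"
    by (simp add: Cons sum_distrib_left sum.Sigma finite_strict_chains_le prod.lessThan_Suc_shift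
        del: prod.lessThan_Suc)
  also have "\<dots> = (\<Sum>ms\<in>strict_chains_le N (length (a # ks)). ?f ms)"
    using sum.reindex_bij_betw[OF strict_chains_le_Suc, of ?f] by (simp add: case_prod_unfold)
  finally show ?case .
qed

lemma sum_inverse_square_le: "N \<noteq> 0 \<Longrightarrow> (\<Sum>j\<in>{1..N}. (1 / real j) ^ 2) \<le> 2 - 1 / real N"
proof (induction N)
  case (Suc N)
  show ?case
  proof (cases "N = 0")
    case False
    then have N: "0 < real N"
      by simp
    have "(1 / real (Suc N)) ^ 2 = 1 / ((real N + 1) * (real N + 1))"
      by (simp add: power2_eq_square algebra_simps)
    also have "\<dots> \<le> 1 / (real N * (real N + 1))"
      using N by (intro divide_left_mono mult_right_mono) auto
    also have "\<dots> = 1 / real N - 1 / real (Suc N)"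
      using N by (simp add: field_simps)
    finally show ?thesis
      using Suc False by simp
  qed simp
qed simp

lemma sum_inverse_power_le_2: "2 \<le> a \<Longrightarrow> (\<Sum>j\<in>{1..N}. (1 / real j) ^ a) \<le> 2"
proof -
  assume a: "2 \<le> a"
  have "(\<Sum>j\<in>{1..N}. (1 / real j) ^ a) \<le> (\<Sum>j\<in>{1..N}. (1 / real j) ^ 2)"
    using a by (intro sum_mono power_decreasing) auto
  also have "\<dots> \<le> 2"
  proof (cases "N = 0")
    case False
    then have "(\<Sum>j\<in>{1..N}. (1 / real j) ^ 2) \<le> 2 - 1 / real N"
      by (rule sum_inverse_square_le)
    moreover have "0 \<le> 1 / real N"
      by simp
    ultimately show ?thesis
      by linarith
  qed simp
  finally show ?thesis .
qed

lemma mhs_inverse_le: "\<forall>a\<in>set ks. 2 \<le> a \<Longrightarrow> tmhs (\<lambda>m. 1 / real m) 0 ks N \<le> 2 ^ length ks"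
proof (induction ks arbitrary: N)
  case (Cons a ks)
  have "tmhs (\<lambda>m. 1 / real m) 0 (a # ks) N = (\<Sum>j\<in>{1..N}. (1 / real j) ^ a * tmhs (\<lambda>m. 1 / real m) 0 ks (j - 1))"
    by (simp add: tmhs_def tmhs_top_Cons)
  also have "\<dots> \<le> (\<Sum>j\<in>{1..N}. (1 / real j) ^ a) * 2 ^ length ks"
    using Cons by (simp add: sum_distrib_right sum_mono mult_left_mono)
  also have "\<dots> \<le> 2 * 2 ^ length ks"
    using sum_inverse_power_le_2[of a N] Cons.prems by (intro mult_right_mono) auto
  finally show ?case
    by simp
qed simp

lemma finite_subset_strict_chains_le:
  assumes "finite F" "F \<subseteq> strict_chains n"
  obtains M where "\<And>N. M \<le> N \<Longrightarrow> F \<subseteq> strict_chains_le N n"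
proof
  let ?M = "Max (insert 0 (\<Union>ms\<in>F. set ms))"
  fix N
  assume N: "?M \<le> N"
  show "F \<subseteq> strict_chains_le N n"
  proof
    fix ms
    assume ms: "ms \<in> F"
    have "m \<le> N" if "m \<in> set ms" for m
    proof -
      have "m \<le> ?M"
        using assms(1) ms that by (intro Max_ge) auto
      with N show ?thesis
        by linarith
    qed
    with ms assms(2) show "ms \<in> strict_chains_le N n"
      by (auto simp: strict_chains_le_def)
  qed
qed

lemma filterlim_strict_chains_le:
  "filterlim (\<lambda>N. strict_chains_le N n) (finite_subsets_at_top (strict_chains n)) sequentially"
  unfolding filterlim_finite_subsets_at_top eventually_sequentially
proof (intro allI impI)
  fix F
  assume "finite F \<and> F \<subseteq> strict_chains n"
  then obtain M where "\<And>N. M \<le> N \<Longrightarrow> F \<subseteq> strict_chains_le N n"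
    using finite_subset_strict_chains_le[of F n] by blast
  moreover have "strict_chains_le N n \<subseteq> strict_chains n" for N
    by (auto simp: strict_chains_le_def)
  ultimately show "\<exists>M. \<forall>N\<ge>M. finite (strict_chains_le N n)
      \<and> F \<subseteq> strict_chains_le N n \<and> strict_chains_le N n \<subseteq> strict_chains n"
    using finite_strict_chains_le by blast
qed

lemma mzv_summable:
  assumes "\<forall>a\<in>set ks. 2 \<le> a"
  shows "(\<lambda>ms. \<Prod>j<length ks. (1 / real (ms ! j)) ^ (ks ! j)) summable_on strict_chains (length ks)"
    (is "?f summable_on ?A")
proof (rule nonneg_bdd_above_summable_on)
  show nonneg: "0 \<le> ?f ms" for ms
    by (intro prod_nonneg zero_le_power) simp
  show "bdd_above (sum ?f ` {F. F \<subseteq> ?A \<and> finite F})"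
  proof (rule bdd_aboveI, clarify)
    fix F
    assume "F \<subseteq> ?A" "finite F"
    then obtain M where "\<And>N. M \<le> N \<Longrightarrow> F \<subseteq> strict_chains_le N (length ks)"
      using finite_subset_strict_chains_le[of F "length ks"] by blast
    then have "sum ?f F \<le> sum ?f (strict_chains_le M (length ks))"
      using nonneg by (intro sum_mono2 finite_strict_chains_le) auto
    also have "\<dots> \<le> 2 ^ length ks"
      using mhs_inverse_le[OF assms, of M] by (simp add: mhs_eq_sum_strict_chains)
    finally show "sum ?f F \<le> 2 ^ length ks" .
  qed
qed

lemma mhs_tendsto_mzv:
  assumes "\<forall>a\<in>set ks. 2 \<le> a"
  shows "(\<lambda>N. tmhs (\<lambda>m. 1 / real m) 0 ks N) \<longlonglongrightarrow> mzv ks"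
proof -
  let ?f = "\<lambda>ms. \<Prod>j<length ks. (1 / real (ms ! j)) ^ (ks ! j)" and ?A = "strict_chains (length ks)"
  have "(sum ?f \<longlongrightarrow> mzv ks) (finite_subsets_at_top ?A)"
    using mzv_summable[OF assms] by (simp add: mzv_def strict_chains_def power_one_over has_sum_def[symmetric])
  then show ?thesis
    unfolding mhs_eq_sum_strict_chains by (rule filterlim_compose[OF _ filterlim_strict_chains_le])
qed

lemma tendsto_sum_list:
  fixes f :: "'a \<Rightarrow> nat \<Rightarrow> real"
  assumes "\<And>p. p \<in> set xs \<Longrightarrow> (\<lambda>N. f p N) \<longlonglongrightarrow> l p"
  shows "(\<lambda>N. \<Sum>p\<leftarrow>xs. f p N) \<longlonglongrightarrow> (\<Sum>p\<leftarrow>xs. l p)"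
  using assms
proof (induction xs)
  case (Cons a xs)
  have "(\<lambda>N. f a N + (\<Sum>p\<leftarrow>xs. f p N)) \<longlonglongrightarrow> l a + (\<Sum>p\<leftarrow>xs. l p)"
    using Cons by (intro tendsto_add) simp_all
  then show ?case
    by simp
qed simp

lemma tmhs_tendsto_zeta_t:
  assumes "\<forall>a\<in>set ks. 2 \<le> a"
  shows "(\<lambda>N. tmhs (\<lambda>m. 1 / real m) t ks N) \<longlonglongrightarrow> zeta_t ks t"
  unfolding tmhs_merges[where \<tau> = t] zeta_t_def
  by (rule tendsto_sum_list, rule tendsto_mult_left, rule mhs_tendsto_mzv)
    (use merges_lower_bound[OF assms] in auto)

lemma zeta_t_Nil: "zeta_t [] t = 1"
proof -
  have "strict_chains 0 = {[]}"
    by (auto simp: strict_chains_def)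
  then show ?thesis
    by (simp add: zeta_t_def mzv_def strict_chains_def[symmetric])
qed

lemma fps_deriv_zeta_t_series:
  fixes t :: real
  assumes "2 \<le> k"
  shows "fps_deriv (Abs_fps (\<lambda>n. zeta_t (replicate n k) t))
    = Abs_fps (\<lambda>n. zeta_t (replicate n k) t) * Abs_fps (\<lambda>j. (t ^ Suc j - (t - 1) ^ Suc j) * mzv [Suc j * k])"
    (is "fps_deriv ?Z = ?Z * ?H")
proof (rule fps_ext)
  fix n
  let ?x = "\<lambda>m. 1 / real m"
  have Z: "(\<lambda>N. tmhs ?x t (replicate i k) N) \<longlonglongrightarrow> zeta_t (replicate i k) t" for i
    using assms by (intro tmhs_tendsto_zeta_t) simp
  have P: "(\<lambda>N. \<Sum>m\<in>{1..N}. (?x m ^ k) ^ Suc j) \<longlonglongrightarrow> mzv [Suc j * k]" for j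
    using mhs_tendsto_mzv[of "[Suc j * k]"] assms
    by (simp add: tmhs_singleton power_mult[symmetric] power_add mult.commute)
  have "(\<lambda>N. fps_nth (fps_deriv (tmhs_series ?x t k N)) n) \<longlonglongrightarrow> fps_nth (fps_deriv ?Z) n"
    unfolding fps_deriv_nth tmhs_series_def fps_nth_Abs_fps by (intro tendsto_mult tendsto_const Z)
  moreover have "(\<lambda>N. fps_nth (tmhs_series ?x t k N * dlog_series ?x t k N) n) \<longlonglongrightarrow> fps_nth (?Z * ?H) n"
    unfolding fps_mult_nth tmhs_series_def dlog_series_def fps_nth_Abs_fps
    by (intro tendsto_sum tendsto_mult tendsto_const Z P)
  ultimately show "fps_nth (fps_deriv ?Z) n = fps_nth (?Z * ?H) n"
    unfolding fps_deriv_tmhs_series by (rule LIMSEQ_unique)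
qed

theorem zeta_t_series_eq_exp:
  fixes t :: real
  assumes "2 \<le> k"
  shows "Abs_fps (\<lambda>n. if n = 0 then 1 else zeta_t (replicate n k) t)
    = fps_exp 1 oo Abs_fps (\<lambda>n. if n = 0 then 0 else (t ^ n - (t - 1) ^ n) * mzv [n * k] / real n)"
    (is "?lhs = fps_exp 1 oo ?B")
proof -
  let ?Z = "Abs_fps (\<lambda>n. zeta_t (replicate n k) t)"
    and ?H = "Abs_fps (\<lambda>j. (t ^ Suc j - (t - 1) ^ Suc j) * mzv [Suc j * k])"
  have "fps_deriv ?B = ?H"
    by (rule fps_ext) (simp del: of_nat_Suc)
  then have exp: "fps_deriv (fps_exp 1 oo ?B) = (fps_exp 1 oo ?B) * ?H"
    using fps_compose_deriv[of ?B "fps_exp 1"] by simp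
  have "?Z = fps_exp 1 oo ?B"
    by (rule fps_ode_unique[OF _ fps_deriv_zeta_t_series[OF assms] exp]) (simp_all add: zeta_t_Nil)
  moreover have "?lhs = ?Z"
    by (rule fps_ext) (simp add: zeta_t_Nil)
  ultimately show ?thesis
    by simp
qed

theorem corollary4p2:
  shows "(\<forall>k::nat. k \<ge> 1 \<longrightarrow> geomser k = texp (logser k))
    \<and> (\<forall>k::nat. k \<ge> 2 \<longrightarrow> (\<forall>t::real.
         Abs_fps (\<lambda>n. if n = 0 then 1 else zeta_t (replicate n k) t)
       = fps_exp 1 oo Abs_fps (\<lambda>n. if n = 0 then 0
              else (t ^ n - (t - 1) ^ n) * mzv [n * k] / real n)))"
  by (intro conjI allI impI geomser_eq_texp_logser zeta_t_series_eq_exp) simp_all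

end
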